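(* Let $V_0$ and $V_1$ be finite-dimensional complex vector spaces with fixed linear coordinates $x_0$ and $x_1$, and let $P(x_0,x_1,\lambda)$ be an element of the ring $\mathcal R(V_0\times V_1\times\mathbb C,V_0)$ with $P(x_0,0,0)\equiv0$. For a fixed integer $m\ge0$ consider the Laurent series expansion $P(x_0,x_1/\lambda^m,\lambda)=\sum_{\nu\in\mathbb Z}c_\nu(x_0,x_1)\lambda^\nu$. Then $c_0(x_0,0)\equiv0$ and, for every $\nu\in\mathbb Z$, $c_\nu$ belongs to the ring $\mathcal R(V_0\times V_1,V_0)$. In addition, if $P=O(K)$ for some integer $K>0$, then $c_\nu=O\big(\tfrac{K-\nu}{m+1}\big)$ for all $\nu\in\mathbb Z$ with $\nu\le K$.
   Context: For a finite-dimensional complex vector space $V$ and a linear subspace $V_0$ (here $V_0$ is identified with $V_0\times\{0\}$ in the products), $\mathcal R(V,V_0)$ is the ring of germs along $V_0$ of holomorphic functions $f$ defined on neighborhoods of $V_0$ in $V$ such that every partial derivative $\partial^\alpha f$ restricted to $V_0$ is a polynomial on $V_0$. The Laurent expansion is obtained by writing $P=\sum_{\beta,\mu}P_{\beta,\mu}(x_0)x_1^\beta\lambda^\mu$ and collecting, for each $\nu$, the terms with $\mu-m|\beta|=\nu$, so $c_\nu=\sum_{\mu-m|\beta|=\nu}P_{\beta,\mu}(x_0)x_1^\beta$. "$f=O(K)$" means that the power series of $f$ at the origin (in all its variables) vanishes to order at least $K$. *)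

theory Defs
  imports "HOL-Analysis.Analysis"
begin

text \<open>Coordinates: a space V0 x W is modelled as complex^('a + 'c); the copy of
V0 = V0 x {0} consists of the vectors vanishing on the Inr-coordinates.\<close>

definition vjoin :: "complex^('a::finite) \<Rightarrow> complex^('c::finite) \<Rightarrow> complex^('a + 'c)" where
  "vjoin x y = (\<chi> k. case k of Inl i \<Rightarrow> x $ i | Inr j \<Rightarrow> y $ j)"

definition vfst :: "complex^('a::finite + 'c::finite) \<Rightarrow> complex^'a" where
  "vfst z = (\<chi> i. z $ Inl i)"

definition cpartial :: "'n::finite \<Rightarrow> (complex^'n \<Rightarrow> complex) \<Rightarrow> complex^'n \<Rightarrow> complex" where
  "cpartial i f x = deriv (\<lambda>t. f (x + axis i t)) 0"

fun cpartials :: "'n::finite list \<Rightarrow> (complex^'n \<Rightarrow> complex) \<Rightarrow> complex^'n \<Rightarrow> complex" where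
  "cpartials [] f = f"
| "cpartials (i # is) f = cpartial i (cpartials is f)"

definition holo_on :: "(complex^'n::finite) set \<Rightarrow> (complex^'n \<Rightarrow> complex) \<Rightarrow> bool" where
  "holo_on U f \<longleftrightarrow> (\<forall>x\<in>U. \<exists>L. (f has_derivative L) (at x) \<and> (\<forall>c v. L (c *s v) = c * L v))"

definition poly_fun :: "(complex^'a::finite \<Rightarrow> complex) \<Rightarrow> bool" where
  "poly_fun f \<longleftrightarrow> (\<exists>A c. finite A \<and>
      (\<forall>x. f x = (\<Sum>\<alpha>\<in>A. c \<alpha> * (\<Prod>i\<in>UNIV. (x $ i) ^ (\<alpha> i)))))"

definition Rring :: "(complex^('a::finite + 'c::finite) \<Rightarrow> complex) \<Rightarrow> bool" where
  "Rring f \<longleftrightarrow> (\<exists>U. open U \<and> range (\<lambda>x0. vjoin x0 0) \<subseteq> U \<and> holo_on U f \<and>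
      (\<forall>is. poly_fun (\<lambda>x0. cpartials is f (vjoin x0 0))))"

text \<open>A list of coordinates realising the multi-index alpha (order irrelevant for
holomorphic functions), and the Taylor coefficient of f at z of index alpha.\<close>
definition mlist :: "('n::finite \<Rightarrow> nat) \<Rightarrow> 'n list" where
  "mlist \<alpha> = (SOME l. \<forall>i. count_list l i = \<alpha> i)"

definition tcoef :: "('n::finite \<Rightarrow> nat) \<Rightarrow> (complex^'n \<Rightarrow> complex) \<Rightarrow> complex^'n \<Rightarrow> complex" where
  "tcoef \<alpha> f z = cpartials (mlist \<alpha>) f z / (\<Prod>i\<in>UNIV. of_nat (fact (\<alpha> i)))"

definition vanishes_to :: "(complex^'n::finite \<Rightarrow> complex) \<Rightarrow> real \<Rightarrow> bool" where
  "vanishes_to f r \<longleftrightarrow> (\<forall>\<alpha>. real (\<Sum>i\<in>UNIV. \<alpha> i) < r \<longrightarrow> tcoef \<alpha> f 0 = 0)"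

text \<open>Points (x0, x1, lambda) of V0 x V1 x C: coordinates Inl i, Inr (Some j), Inr None.\<close>
definition vtriple :: "complex^('a::finite) \<Rightarrow> complex^('b::finite) \<Rightarrow> complex \<Rightarrow> complex^('a + 'b option)" where
  "vtriple x0 x1 l = vjoin x0 (\<chi> k. case k of Some j \<Rightarrow> x1 $ j | None \<Rightarrow> l)"

definition Pcoef :: "(complex^('a::finite + 'b::finite option) \<Rightarrow> complex) \<Rightarrow> ('b \<Rightarrow> nat) \<Rightarrow> nat \<Rightarrow> complex^'a \<Rightarrow> complex" where
  "Pcoef P \<beta> \<mu> x0 = tcoef (\<lambda>k. case k of Inl _ \<Rightarrow> 0 | Inr (Some j) \<Rightarrow> \<beta> j | Inr None \<Rightarrow> \<mu>) P (vjoin x0 0)"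

text \<open>Index set and terms of c_nu = sum over mu - m|beta| = nu of P_{beta,mu}(x0) x1^beta.\<close>
definition laurent_idx :: "nat \<Rightarrow> int \<Rightarrow> ('b::finite \<Rightarrow> nat) set" where
  "laurent_idx m \<nu> = {\<beta>. \<nu> + int m * int (\<Sum>j\<in>UNIV. \<beta> j) \<ge> 0}"

definition laurent_term :: "(complex^('a::finite + 'b::finite option) \<Rightarrow> complex) \<Rightarrow> nat \<Rightarrow> int \<Rightarrow> complex^('a + 'b) \<Rightarrow> ('b \<Rightarrow> nat) \<Rightarrow> complex" where
  "laurent_term P m \<nu> z \<beta> = Pcoef P \<beta> (nat (\<nu> + int m * int (\<Sum>j\<in>UNIV. \<beta> j))) (vfst z) *
      (\<Prod>j\<in>UNIV. (z $ Inr j) ^ (\<beta> j))"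

definition laurent_coef :: "(complex^('a::finite + 'b::finite option) \<Rightarrow> complex) \<Rightarrow> nat \<Rightarrow> int \<Rightarrow> complex^('a + 'b) \<Rightarrow> complex" where
  "laurent_coef P m \<nu> z = infsum (laurent_term P m \<nu> z) (laurent_idx m \<nu>)"

end

(* Every point (x0, 0, 0) has a polydisc neighbourhood on which P is the sum of its Taylor
   series (Osgood's lemma, proved with the iterated Cauchy formula).  Substituting x1/\<lambda>^m
   and collecting powers of \<lambda>, the Taylor coefficient of x0^\<gamma> x1^\<beta> in c_\<nu> is
   the Taylor coefficient of x0^\<gamma> x1^\<beta> \<lambda>^\<mu> of P with \<mu> = \<nu> + m|\<beta>|.
   These coefficients still obey Cauchy estimates on a smaller polyradius, so c_\<nu> is a
   convergent power series around each (x0, 0): it is holomorphic there, and its partial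
   derivatives on V0 are constant multiples of partial derivatives of P, hence polynomial.
   Finally |\<gamma>| + |\<beta>| < (K - \<nu>)/(m + 1) forces |\<gamma>| + |\<beta>| + \<mu> < K,
   which gives the order of vanishing. *)

theory Submission
  imports Defs "HOL-Complex_Analysis.Complex_Analysis"
begin

no_notation fps_nth (infixl "$" 75)

section \<open>Power series in several complex variables\<close>

definition mmonom :: "('n::finite \<Rightarrow> nat) \<Rightarrow> complex^'n \<Rightarrow> complex" where
  "mmonom \<alpha> h = (\<Prod>i\<in>UNIV. (h$i)^(\<alpha> i))"

definition mdeg :: "('n::finite \<Rightarrow> nat) \<Rightarrow> nat" where
  "mdeg \<alpha> = (\<Sum>i\<in>UNIV. \<alpha> i)"

definition mpow_series :: "(('n::finite \<Rightarrow> nat) \<Rightarrow> complex) \<Rightarrow> complex^'n \<Rightarrow> complex" where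
  "mpow_series a h = (\<Sum>\<^sub>\<infinity>\<alpha>. a \<alpha> * mmonom \<alpha> h)"

lemma sum_power_le_geometric:
  fixes q :: real
  assumes "0 \<le> q" "q < 1" "finite J"
  shows "(\<Sum>j\<in>J. q ^ j) \<le> 1 / (1 - q)"
proof -
  have "(\<Sum>j\<in>J. q ^ j) \<le> (\<Sum>j. q ^ j)"
    by (rule sum_le_suminf) (use assms in \<open>auto intro: summable_geometric\<close>)
  also have "\<dots> = 1 / (1 - q)" using assms by (simp add: suminf_geometric)
  finally show ?thesis .
qed

lemma summable_on_power_mdeg:
  fixes q :: real
  assumes q: "0 \<le> q" "q < 1"
  shows "(\<lambda>\<alpha>::'n::finite \<Rightarrow> nat. q ^ mdeg \<alpha>) summable_on UNIV"
proof (rule nonneg_bdd_above_summable_on)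
  show "0 \<le> q ^ mdeg \<alpha>" for \<alpha> :: "'n \<Rightarrow> nat" using q by simp
  show "bdd_above (sum (\<lambda>\<alpha>::'n \<Rightarrow> nat. q ^ mdeg \<alpha>) ` {F. F \<subseteq> UNIV \<and> finite F})"
  proof (rule bdd_aboveI2)
    fix F :: "('n \<Rightarrow> nat) set" assume "F \<in> {F. F \<subseteq> UNIV \<and> finite F}"
    then have fin: "finite F" by auto
    define B where "B i = (\<lambda>\<alpha>. \<alpha> i) ` F" for i
    have finB: "finite (B i)" for i using fin by (simp add: B_def)
    have sub: "F \<subseteq> PiE UNIV B" by (auto simp: B_def PiE_def Pi_def extensional_def)
    have "(\<Sum>\<alpha>\<in>F. q ^ mdeg \<alpha>) = (\<Sum>\<alpha>\<in>F. \<Prod>i\<in>UNIV. q ^ \<alpha> i)"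
      by (simp add: mdeg_def power_sum)
    also have "\<dots> \<le> (\<Sum>\<alpha>\<in>PiE UNIV B. \<Prod>i\<in>UNIV. q ^ \<alpha> i)"
      by (rule sum_mono2) (use sub finB q in \<open>auto intro!: finite_PiE prod_nonneg\<close>)
    also have "\<dots> = (\<Prod>i\<in>UNIV. \<Sum>j\<in>B i. q ^ j)"
      by (rule prod_sum_PiE[symmetric]) (auto simp: finB)
    also have "\<dots> \<le> (\<Prod>i\<in>(UNIV::'n set). 1 / (1 - q))"
      by (rule prod_mono) (use q finB in \<open>auto intro: sum_power_le_geometric sum_nonneg\<close>)
    finally show "(\<Sum>\<alpha>\<in>F. q ^ mdeg \<alpha>) \<le> (\<Prod>i\<in>(UNIV::'n set). 1 / (1 - q))" .
  qed
qed

lemma linear_times_power_bounded: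
  fixes t :: real
  assumes "0 \<le> t" "t < 1"
  shows "\<exists>C. \<forall>d::nat. real (d + 1) * t ^ d \<le> C"
proof -
  have "(\<lambda>d. real d * t ^ d + t ^ d) \<longlonglongrightarrow> 0 + 0"
    by (intro tendsto_add powser_times_n_limit_0 LIMSEQ_power_zero) (use assms in auto)
  then have "Bseq (\<lambda>d. real d * t ^ d + t ^ d)"
    by (intro convergent_imp_Bseq) (auto simp: convergent_def)
  then obtain C where "\<And>d. norm (real d * t ^ d + t ^ d) \<le> C" by (auto simp: Bseq_def)
  then show ?thesis by (intro exI[of _ C]) (auto simp: algebra_simps abs_le_iff)
qed

lemma summable_on_mdeg_times_power_mdeg:
  fixes t :: real
  assumes "0 \<le> t" "t < 1"
  shows "(\<lambda>\<alpha>::'n::finite \<Rightarrow> nat. real (mdeg \<alpha> + 1) * t ^ mdeg \<alpha>) summable_on UNIV"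
proof -
  define s where "s = (1 + t) / 2"
  have s: "0 < s" "s < 1" "t < s" using assms by (auto simp: s_def)
  have "0 \<le> t / s" "t / s < 1" using s assms by (auto simp: field_simps)
  then obtain C where C: "\<And>d::nat. real (d + 1) * (t / s) ^ d \<le> C"
    using linear_times_power_bounded by blast
  show ?thesis
  proof (rule summable_on_comparison_test)
    show "(\<lambda>\<alpha>::'n \<Rightarrow> nat. C * s ^ mdeg \<alpha>) summable_on UNIV"
      by (intro summable_on_cmult_right summable_on_power_mdeg) (use s in auto)
    fix \<alpha> :: "'n \<Rightarrow> nat"
    show "0 \<le> real (mdeg \<alpha> + 1) * t ^ mdeg \<alpha>" using assms by simp
    have "real (mdeg \<alpha> + 1) * t ^ mdeg \<alpha> = (real (mdeg \<alpha> + 1) * (t / s) ^ mdeg \<alpha>) * s ^ mdeg \<alpha>"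
      using s by (simp add: power_divide)
    also have "\<dots> \<le> C * s ^ mdeg \<alpha>" by (intro mult_right_mono C) (use s in auto)
    finally show "real (mdeg \<alpha> + 1) * t ^ mdeg \<alpha> \<le> C * s ^ mdeg \<alpha>" .
  qed
qed

lemma max_norm_coord_less:
  fixes h :: "complex^'n::finite"
  assumes "\<And>i. norm (h$i) < R"
  obtains \<rho> where "0 \<le> \<rho>" "\<rho> < R" "\<And>i. norm (h$i) \<le> \<rho>"
proof
  show "Max (range (\<lambda>i. norm (h$i))) < R" using assms by (subst Max_less_iff) auto
  show "norm (h$i) \<le> Max (range (\<lambda>i. norm (h$i)))" for i by (rule Max_ge) auto
  then show "0 \<le> Max (range (\<lambda>i. norm (h$i)))" using norm_ge_zero order_trans by blast
qed

lemma norm_mmonom_le: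
  assumes "\<And>i. norm (h$i) \<le> \<rho>"
  shows "norm (mmonom \<alpha> h) \<le> \<rho> ^ mdeg \<alpha>"
proof -
  have "norm (mmonom \<alpha> h) = (\<Prod>i\<in>UNIV. norm (h$i) ^ \<alpha> i)"
    by (simp add: mmonom_def prod_norm[symmetric] norm_power)
  also have "\<dots> \<le> (\<Prod>i\<in>UNIV. \<rho> ^ \<alpha> i)" by (intro prod_mono conjI power_mono assms) auto
  also have "\<dots> = \<rho> ^ mdeg \<alpha>" by (simp add: mdeg_def power_sum)
  finally show ?thesis .
qed

lemma cauchy_bound_nonneg:
  assumes "\<And>\<alpha>. norm (a \<alpha>) * \<rho> ^ mdeg \<alpha> \<le> M" "0 \<le> \<rho>"
  shows "0 \<le> M"
  using assms(1)[of undefined] assms(2) by (meson mult_nonneg_nonneg norm_ge_zero order_trans zero_le_power)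

lemma abs_summable_mpow_series:
  assumes aM: "\<And>\<alpha>. norm (a \<alpha>) * \<rho> ^ mdeg \<alpha> \<le> M" and "0 < \<rho>"
    and h: "\<And>i. norm (h$i) \<le> \<rho>'" and "\<rho>' < \<rho>"
  shows "(\<lambda>\<alpha>. norm (a \<alpha> * mmonom \<alpha> h)) summable_on UNIV"
proof (rule summable_on_comparison_test)
  have "0 \<le> \<rho>'" using h[of undefined] norm_ge_zero order_trans by blast
  then show "(\<lambda>\<alpha>. M * (\<rho>' / \<rho>) ^ mdeg \<alpha>) summable_on UNIV"
    by (intro summable_on_cmult_right summable_on_power_mdeg) (use assms in auto)
  fix \<alpha> :: "'a \<Rightarrow> nat"
  have "norm (a \<alpha> * mmonom \<alpha> h) \<le> norm (a \<alpha>) * \<rho>' ^ mdeg \<alpha>"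
    unfolding norm_mult by (intro mult_left_mono norm_mmonom_le h) auto
  also have "\<dots> = (norm (a \<alpha>) * \<rho> ^ mdeg \<alpha>) * (\<rho>' / \<rho>) ^ mdeg \<alpha>"
    using \<open>0 < \<rho>\<close> by (simp add: power_divide)
  also have "\<dots> \<le> M * (\<rho>' / \<rho>) ^ mdeg \<alpha>"
    by (intro mult_right_mono aM) (use \<open>0 < \<rho>\<close> \<open>0 \<le> \<rho>'\<close> in auto)
  finally show "norm (a \<alpha> * mmonom \<alpha> h) \<le> M * (\<rho>' / \<rho>) ^ mdeg \<alpha>" .
qed simp

lemma summable_mpow_series:
  assumes "\<And>\<alpha>. norm (a \<alpha>) * \<rho> ^ mdeg \<alpha> \<le> M" "0 < \<rho>" "\<And>i. norm (h$i) \<le> \<rho>'" "\<rho>' < \<rho>"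
  shows "(\<lambda>\<alpha>. a \<alpha> * mmonom \<alpha> h) summable_on UNIV"
  using abs_summable_mpow_series[OF assms] summable_on_iff_abs_summable_on_complex by blast

lemma mmonom_zero: "mmonom \<alpha> (0::complex^'n::finite) = (if \<alpha> = (\<lambda>_. 0) then 1 else 0)"
proof (cases "\<alpha> = (\<lambda>_. 0)")
  case False
  then obtain i where "\<alpha> i \<noteq> 0" by auto
  then have "mmonom \<alpha> (0::complex^'n) = 0" unfolding mmonom_def by (intro prod_zero) auto
  then show ?thesis using False by simp
qed (simp add: mmonom_def)

lemma mmonom_eq_0: "h$k = 0 \<Longrightarrow> \<beta> k \<noteq> 0 \<Longrightarrow> mmonom \<beta> h = 0"
  unfolding mmonom_def by (rule prod_zero) (auto intro: bexI[of _ k])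

lemma mpow_series_at_0: "mpow_series b (0::complex^'n::finite) = b (\<lambda>_. 0)"
proof -
  have "mpow_series b 0 = (\<Sum>\<^sub>\<infinity>\<alpha>\<in>{\<lambda>_. 0}. b \<alpha> * mmonom \<alpha> (0::complex^'n))"
    unfolding mpow_series_def by (rule infsum_cong_neutral) (auto simp: mmonom_zero)
  also have "\<dots> = b (\<lambda>_. 0)" by (simp add: mmonom_zero)
  finally show ?thesis .
qed

lemma mdeg_le: "\<beta> k \<le> mdeg \<beta>"
  unfolding mdeg_def by (rule member_le_sum) auto

lemma mdeg_fun_upd_Suc: "mdeg (\<beta>(k := Suc (\<beta> k))) = Suc (mdeg \<beta>)"
  unfolding mdeg_def by (simp add: sum.remove[of UNIV k] sum.cong[of "UNIV - {k}" _ "\<beta>(k := Suc (\<beta> k))" \<beta>])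

lemma mdeg_remove: "mdeg \<alpha> = \<alpha> k + mdeg (\<alpha>(k := 0))"
  unfolding mdeg_def by (simp add: sum.remove[of UNIV k] sum.cong[of "UNIV - {k}" _ "\<alpha>(k := 0)" \<alpha>])

section \<open>Termwise differentiation\<close>

lemma sums_from_nat_into_infsum:
  fixes F :: "'i::countable \<Rightarrow> 'b::banach"
  assumes "infinite (UNIV :: 'i set)" "(\<lambda>i. norm (F i)) summable_on UNIV"
  shows "(\<lambda>n. F (from_nat_into UNIV n)) sums infsum F UNIV"
proof -
  have bij: "bij_betw (from_nat_into (UNIV :: 'i set)) UNIV UNIV"
    using assms(1) by (intro bij_betw_from_nat_into) auto
  have "F summable_on UNIV" using assms(2) abs_summable_summable by blast
  then have "(F has_sum infsum F UNIV) UNIV" by (rule has_sum_infsum)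
  then have "((\<lambda>n. F (from_nat_into UNIV n)) has_sum infsum F UNIV) UNIV"
    using has_sum_reindex_bij_betw[OF bij] by blast
  then show ?thesis by (rule has_sum_imp_sums)
qed

lemma norm_series_tail_le:
  fixes f :: "nat \<Rightarrow> 'b::banach"
  assumes "summable B" "\<And>i. norm (f i) \<le> B i"
  shows "norm ((\<Sum>i<n. f i) - (\<Sum>i. f i)) \<le> (\<Sum>i. B (i + n))"
proof -
  have sf: "summable f" by (rule summable_comparison_test'[OF assms])
  have sBn: "summable (\<lambda>i. B (i + n))" using assms(1) by (rule summable_ignore_initial_segment)
  have sfn: "summable (\<lambda>i. norm (f (i + n)))"
    by (rule summable_comparison_test'[OF sBn]) (use assms(2) in auto)
  have "norm ((\<Sum>i<n. f i) - (\<Sum>i. f i)) = norm (\<Sum>i. f (i + n))"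
    using suminf_split_initial_segment[OF sf, of n] by (simp add: norm_minus_commute)
  also have "\<dots> \<le> (\<Sum>i. norm (f (i + n)))" by (rule summable_norm[OF sfn])
  also have "\<dots> \<le> (\<Sum>i. B (i + n))" by (rule suminf_le) (use assms(2) sfn sBn in auto)
  finally show ?thesis .
qed

lemma has_derivative_infsum:
  fixes f :: "'i::countable \<Rightarrow> 'a::real_normed_vector \<Rightarrow> 'b::banach"
  assumes inf: "infinite (UNIV :: 'i set)" and S: "convex S" "open S" "x0 \<in> S"
    and f': "\<And>i x. x \<in> S \<Longrightarrow> (f i has_derivative f' i x) (at x)"
    and f'_le: "\<And>i x v. x \<in> S \<Longrightarrow> norm (f' i x v) \<le> B i * norm v"
    and B: "B summable_on UNIV" "\<And>i. 0 \<le> B i"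
    and f_abs: "\<And>x. x \<in> S \<Longrightarrow> (\<lambda>i. norm (f i x)) summable_on UNIV"
  shows "((\<lambda>x. \<Sum>\<^sub>\<infinity>i. f i x) has_derivative (\<lambda>v. \<Sum>\<^sub>\<infinity>i. f' i x0 v)) (at x0)"
proof -
  define e where "e = from_nat_into (UNIV :: 'i set)"
  define g' where "g' x v = (\<Sum>n. f' (e n) x v)" for x v
  have Be: "summable (\<lambda>n. B (e n))"
    using sums_from_nat_into_infsum[OF inf, of B] B by (simp add: e_def sums_iff)
  have f'_abs: "(\<lambda>i. norm (f' i x v)) summable_on UNIV" if "x \<in> S" for x v
    by (rule summable_on_comparison_test[OF summable_on_cmult_left[OF B(1)]])
      (use f'_le[OF that] in auto)
  have "\<exists>g. \<forall>x\<in>S. (\<lambda>n. f (e n) x) sums g x \<and> (g has_derivative g' x) (at x within S)"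
  proof (rule has_derivative_series[OF S(1) _ _ S(3)])
    show "(f (e n) has_derivative f' (e n) x) (at x within S)" if "x \<in> S" for n x
      using f'[OF that] by (rule has_derivative_at_withinI)
    show "(\<lambda>n. f (e n) x0) sums (\<Sum>\<^sub>\<infinity>i. f i x0)"
      unfolding e_def by (rule sums_from_nat_into_infsum[OF inf f_abs[OF S(3)]])
    fix \<epsilon> :: real assume "0 < \<epsilon>"
    then obtain N where N: "\<And>n. n \<ge> N \<Longrightarrow> norm (\<Sum>i. B (e (i + n))) < \<epsilon>"
      using suminf_exist_split[OF _ Be] by blast
    show "\<forall>\<^sub>F n in sequentially. \<forall>x\<in>S. \<forall>v. norm ((\<Sum>i<n. f' (e i) x v) - g' x v) \<le> \<epsilon> * norm v"
    proof (rule eventually_sequentiallyI[of N], intro ballI allI)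
      fix n x v assume "N \<le> n" "x \<in> S"
      have "norm ((\<Sum>i<n. f' (e i) x v) - g' x v) \<le> (\<Sum>i. B (e (i + n)) * norm v)"
        unfolding g'_def by (rule norm_series_tail_le) (use summable_mult2[OF Be] f'_le \<open>x \<in> S\<close> in auto)
      also have "\<dots> = (\<Sum>i. B (e (i + n))) * norm v"
        by (rule suminf_mult2[symmetric]) (rule summable_ignore_initial_segment[OF Be])
      also have "\<dots> \<le> \<epsilon> * norm v" using N[OF \<open>N \<le> n\<close>] by (intro mult_right_mono) auto
      finally show "norm ((\<Sum>i<n. f' (e i) x v) - g' x v) \<le> \<epsilon> * norm v" .
    qed
  qed
  then obtain g where g: "\<And>x. x \<in> S \<Longrightarrow> (\<lambda>n. f (e n) x) sums g x \<and> (g has_derivative g' x) (at x within S)"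
    by blast
  have "g' x0 = (\<lambda>v. \<Sum>\<^sub>\<infinity>i. f' i x0 v)"
    using sums_from_nat_into_infsum[OF inf f'_abs[OF S(3)]] by (auto simp: g'_def e_def sums_iff)
  then have "(g has_derivative (\<lambda>v. \<Sum>\<^sub>\<infinity>i. f' i x0 v)) (at x0)"
    using g[OF S(3)] at_within_open[OF S(3,2)] by simp
  then show ?thesis
  proof (rule has_derivative_transform_within_open[OF _ S(2,3)])
    show "g x = (\<Sum>\<^sub>\<infinity>i. f i x)" if "x \<in> S" for x
      using g[OF that] sums_from_nat_into_infsum[OF inf f_abs[OF that]] sums_unique2
      unfolding e_def by blast
  qed
qed

definition mmonom_deriv :: "('n::finite \<Rightarrow> nat) \<Rightarrow> complex^'n \<Rightarrow> complex^'n \<Rightarrow> complex" where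
  "mmonom_deriv \<alpha> x v =
     (\<Sum>i\<in>UNIV. (of_nat (\<alpha> i) * v$i * (x$i)^(\<alpha> i - 1)) * (\<Prod>j\<in>UNIV-{i}. (x$j)^(\<alpha> j)))"

lemma mmonom_has_derivative: "(mmonom \<alpha> has_derivative mmonom_deriv \<alpha> x) (at x within S)"
  unfolding mmonom_def[abs_def] mmonom_deriv_def[abs_def]
  by (intro has_derivative_prod has_derivative_power bounded_linear_imp_has_derivative
      bounded_linear_vec_nth)

lemma mmonom_deriv_scale: "mmonom_deriv \<alpha> x (c *s v) = c * mmonom_deriv \<alpha> x v"
  by (simp add: mmonom_deriv_def sum_distrib_left algebra_simps)

lemma mmonom_deriv_axis:
  fixes x :: "complex^'n::finite"
  shows "mmonom_deriv \<alpha> x (axis k 1) =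
    of_nat (\<alpha> k) * (x$k)^(\<alpha> k - 1) * (\<Prod>j\<in>UNIV-{k}. (x$j)^(\<alpha> j))"
proof -
  have "mmonom_deriv \<alpha> x (axis k 1) = (\<Sum>i\<in>{k}. (of_nat (\<alpha> i) * (axis k 1)$i * (x$i)^(\<alpha> i - 1)) *
      (\<Prod>j\<in>UNIV-{i}. (x$j)^(\<alpha> j)))"
    unfolding mmonom_deriv_def by (rule sum.mono_neutral_right) (auto simp: axis_def)
  then show ?thesis by (simp add: axis_def)
qed

lemma mmonom_deriv_axis_Suc:
  "mmonom_deriv (\<beta>(k := Suc (\<beta> k))) x (axis k 1) = of_nat (Suc (\<beta> k)) * mmonom \<beta> x"
proof -
  have "(\<Prod>j\<in>UNIV-{k}. (x$j)^((\<beta>(k := Suc (\<beta> k))) j)) = (\<Prod>j\<in>UNIV-{k}. (x$j)^(\<beta> j))"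
    by (rule prod.cong) auto
  then show ?thesis by (simp add: mmonom_deriv_axis mmonom_def prod.remove[of UNIV k])
qed

lemma norm_mmonom_deriv_le:
  assumes "\<And>i. norm (x$i) \<le> \<rho>" "0 < \<rho>"
  shows "\<rho> * norm (mmonom_deriv \<alpha> x v) \<le> real (mdeg \<alpha>) * \<rho> ^ mdeg \<alpha> * norm v"
proof -
  have term_le: "\<rho> * norm ((of_nat (\<alpha> i) * v$i * (x$i)^(\<alpha> i - 1)) * (\<Prod>j\<in>UNIV-{i}. (x$j)^(\<alpha> j)))
     \<le> real (\<alpha> i) * \<rho> ^ mdeg \<alpha> * norm v" for i
  proof (cases "\<alpha> i = 0")
    case False
    have "\<rho> * norm ((of_nat (\<alpha> i) * v$i * (x$i)^(\<alpha> i - 1)) * (\<Prod>j\<in>UNIV-{i}. (x$j)^(\<alpha> j)))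
        = real (\<alpha> i) * norm (v$i) * (\<rho> * norm (x$i)^(\<alpha> i - 1)) * (\<Prod>j\<in>UNIV-{i}. norm (x$j)^(\<alpha> j))"
      by (simp add: norm_mult norm_power prod_norm[symmetric])
    also have "\<dots> \<le> real (\<alpha> i) * norm v * (\<rho> * \<rho> ^ (\<alpha> i - 1)) * (\<Prod>j\<in>UNIV-{i}. \<rho> ^ \<alpha> j)"
      using assms by (intro mult_mono mult_left_mono power_mono prod_mono)
        (auto intro: prod_nonneg power_mono assms Finite_Cartesian_Product.norm_nth_le)
    also have "\<rho> * \<rho> ^ (\<alpha> i - 1) = \<rho> ^ \<alpha> i" using False by (simp flip: power_Suc)
    also have "real (\<alpha> i) * norm v * \<rho> ^ \<alpha> i * (\<Prod>j\<in>UNIV-{i}. \<rho> ^ \<alpha> j)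
       = real (\<alpha> i) * \<rho> ^ mdeg \<alpha> * norm v"
      by (simp add: mdeg_def power_sum prod.remove[of UNIV i])
    finally show ?thesis .
  qed simp
  have "\<rho> * norm (mmonom_deriv \<alpha> x v) \<le>
      (\<Sum>i\<in>UNIV. \<rho> * norm ((of_nat (\<alpha> i) * v$i * (x$i)^(\<alpha> i - 1)) * (\<Prod>j\<in>UNIV-{i}. (x$j)^(\<alpha> j))))"
    unfolding mmonom_deriv_def sum_distrib_left[symmetric] using assms
    by (intro mult_left_mono norm_sum) auto
  also have "\<dots> \<le> (\<Sum>i\<in>UNIV. real (\<alpha> i) * \<rho> ^ mdeg \<alpha> * norm v)" by (intro sum_mono term_le)
  also have "\<dots> = real (mdeg \<alpha>) * \<rho> ^ mdeg \<alpha> * norm v" by (simp add: mdeg_def sum_distrib_right)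
  finally show ?thesis .
qed

lemma infinite_UNIV_multi_index: "infinite (UNIV :: ('n \<Rightarrow> nat) set)"
proof
  assume "finite (UNIV :: ('n \<Rightarrow> nat) set)"
  then have "finite (range (\<lambda>k::nat. (\<lambda>_::'n. k)))" by (rule finite_subset[rotated]) auto
  moreover have "inj (\<lambda>k::nat. (\<lambda>_::'n. k))" by (rule injI) (drule fun_cong, simp)
  ultimately show False using finite_imageD by blast
qed

lemma mpow_series_has_derivative:
  fixes a :: "('n::finite \<Rightarrow> nat) \<Rightarrow> complex"
  assumes aM: "\<And>\<alpha>. norm (a \<alpha>) * \<rho> ^ mdeg \<alpha> \<le> M" and \<rho>: "0 < \<rho>"
    and h0: "\<And>i. norm (h0$i) < \<rho>"
  shows "(mpow_series a has_derivative (\<lambda>v. \<Sum>\<^sub>\<infinity>\<alpha>. a \<alpha> * mmonom_deriv \<alpha> h0 v)) (at h0)"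
proof -
  have M0: "0 \<le> M" using cauchy_bound_nonneg[OF aM] \<rho> by simp
  obtain s where s: "0 \<le> s" "s < \<rho>" "\<And>i. norm (h0$i) \<le> s" using max_norm_coord_less h0 by blast
  define \<rho>1 where "\<rho>1 = (s + \<rho>) / 2"
  have \<rho>1: "s < \<rho>1" "\<rho>1 < \<rho>" "0 < \<rho>1" using s by (auto simp: \<rho>1_def)
  define S where "S = ball h0 (\<rho>1 - s)"
  have in_S: "norm (h$i) \<le> \<rho>1" if "h \<in> S" for h i
  proof -
    have "norm (h$i) \<le> norm (h0$i) + norm ((h - h0)$i)" by (metis norm_triangle_sub vector_minus_component)
    also have "norm ((h - h0)$i) \<le> norm (h - h0)" by (rule Finite_Cartesian_Product.norm_nth_le)
    also have "norm (h - h0) < \<rho>1 - s" using that by (simp add: S_def dist_norm norm_minus_commute)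
    finally show ?thesis using s(3)[of i] by simp
  qed
  define t where "t = \<rho>1 / \<rho>"
  have t: "0 \<le> t" "t < 1" using \<rho>1 \<rho> by (auto simp: t_def)
  define B where "B \<alpha> = M / \<rho>1 * (real (mdeg \<alpha> + 1) * t ^ mdeg \<alpha>)" for \<alpha> :: "'n \<Rightarrow> nat"
  show ?thesis
    unfolding mpow_series_def[abs_def]
  proof (rule has_derivative_infsum[OF infinite_UNIV_multi_index])
    show "convex S" "open S" "h0 \<in> S" using \<rho>1 by (auto simp: S_def)
    show "((\<lambda>h. a \<alpha> * mmonom \<alpha> h) has_derivative (\<lambda>v. a \<alpha> * mmonom_deriv \<alpha> h v)) (at h)" for \<alpha> h
      by (intro has_derivative_mult_right mmonom_has_derivative)
    show "B summable_on UNIV"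
      unfolding B_def by (intro summable_on_cmult_right summable_on_mdeg_times_power_mdeg t)
    show "0 \<le> B \<alpha>" for \<alpha> using M0 \<rho>1 t by (simp add: B_def)
    show "(\<lambda>\<alpha>. norm (a \<alpha> * mmonom \<alpha> h)) summable_on UNIV" if "h \<in> S" for h
      by (rule abs_summable_mpow_series[OF aM \<rho>, of h \<rho>1]) (use in_S[OF that] \<rho>1 in auto)
    fix \<alpha> h v assume "h \<in> S"
    have "\<rho>1 * norm (mmonom_deriv \<alpha> h v) \<le> real (mdeg \<alpha>) * \<rho>1 ^ mdeg \<alpha> * norm v"
      by (rule norm_mmonom_deriv_le) (use in_S[OF \<open>h \<in> S\<close>] \<rho>1 in auto)
    then have "norm (mmonom_deriv \<alpha> h v) \<le> real (mdeg \<alpha>) * \<rho>1 ^ mdeg \<alpha> * norm v / \<rho>1"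
      using \<rho>1 by (simp add: field_simps)
    then have "norm (a \<alpha> * mmonom_deriv \<alpha> h v) \<le> norm (a \<alpha>) * (real (mdeg \<alpha>) * \<rho>1 ^ mdeg \<alpha> * norm v / \<rho>1)"
      unfolding norm_mult by (intro mult_left_mono) auto
    also have "\<dots> = (norm (a \<alpha>) * \<rho> ^ mdeg \<alpha>) * (real (mdeg \<alpha>) * t ^ mdeg \<alpha> * norm v / \<rho>1)"
      using \<rho> by (simp add: t_def field_simps)
    also have "\<dots> \<le> M * (real (mdeg \<alpha> + 1) * t ^ mdeg \<alpha> * norm v / \<rho>1)"
      using M0 t \<rho>1 by (intro mult_mono aM divide_right_mono mult_right_mono) auto
    also have "\<dots> = B \<alpha> * norm v" by (simp add: B_def field_simps)
    finally show "norm (a \<alpha> * mmonom_deriv \<alpha> h v) \<le> B \<alpha> * norm v" .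
  qed
qed

section \<open>Functions given by convergent power series\<close>

definition polydisc :: "complex^'n::finite \<Rightarrow> real \<Rightarrow> (complex^'n) set" where
  "polydisc p r = {x. \<forall>i. norm (x$i - p$i) < r}"

definition mpow_expansion ::
    "(complex^'n::finite \<Rightarrow> complex) \<Rightarrow> complex^'n \<Rightarrow> (('n \<Rightarrow> nat) \<Rightarrow> complex) \<Rightarrow> real \<Rightarrow> bool" where
  "mpow_expansion f p a r \<longleftrightarrow> 0 < r \<and>
     (\<forall>\<rho>. 0 < \<rho> \<and> \<rho> < r \<longrightarrow> (\<exists>M. \<forall>\<alpha>. norm (a \<alpha>) * \<rho> ^ mdeg \<alpha> \<le> M)) \<and>
     (\<forall>h. (\<forall>i. norm (h$i) < r) \<longrightarrow> f (p + h) = mpow_series a h)"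

definition coeff_deriv :: "'n::finite \<Rightarrow> (('n \<Rightarrow> nat) \<Rightarrow> complex) \<Rightarrow> ('n \<Rightarrow> nat) \<Rightarrow> complex" where
  "coeff_deriv k a \<beta> = of_nat (Suc (\<beta> k)) * a (\<beta>(k := Suc (\<beta> k)))"

fun coeff_derivs :: "'n::finite list \<Rightarrow> (('n \<Rightarrow> nat) \<Rightarrow> complex) \<Rightarrow> ('n \<Rightarrow> nat) \<Rightarrow> complex" where
  "coeff_derivs [] a = a"
| "coeff_derivs (k # ks) a = coeff_deriv k (coeff_derivs ks a)"

lemma open_polydisc: "open (polydisc (p::complex^'n::finite) r)"
proof -
  have "polydisc p r = (\<Inter>i\<in>UNIV. {x. norm (x$i - p$i) < r})" by (auto simp: polydisc_def)
  moreover have "open {x::complex^'n. norm (x$i - p$i) < r}" for i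
  proof (rule open_Collect_less)
    show "continuous_on UNIV (\<lambda>x::complex^'n. norm (x$i - p$i))"
      by (intro continuous_intros linear_continuous_on[OF bounded_linear_vec_nth])
  qed auto
  ultimately show ?thesis by auto
qed

lemma bounded_linear_axis: "bounded_linear (axis k :: complex \<Rightarrow> complex^'n::finite)"
proof (rule bounded_linear_intro[where K=1])
  show "axis k (x + y) = (axis k x + axis k y :: complex^'n)" for x y by (simp add: vec_eq_iff axis_def)
  show "axis k (r *\<^sub>R x) = (r *\<^sub>R axis k x :: complex^'n)" for r x by (simp add: vec_eq_iff axis_def)
  show "norm (axis k x :: complex^'n) \<le> norm x * 1" for x
  proof -
    have "norm (axis k x :: complex^'n) \<le> (\<Sum>i\<in>UNIV. norm ((axis k x :: complex^'n)$i))"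
      unfolding norm_vec_def by (rule L2_set_le_sum) auto
    also have "\<dots> = (\<Sum>i\<in>{k}. norm ((axis k x :: complex^'n)$i))"
      by (rule sum.mono_neutral_right) (auto simp: axis_def)
    finally show ?thesis by simp
  qed
qed

lemma has_field_derivative_along_axis:
  fixes f :: "complex^'n::finite \<Rightarrow> complex"
  assumes "(f has_derivative L) (at (x + axis k t))" "\<And>c v. L (c *s v) = c * L v"
  shows "((\<lambda>t. f (x + axis k t)) has_field_derivative L (axis k 1)) (at t)"
proof -
  have "((\<lambda>t. x + axis k t) has_derivative axis k) (at t)"
    using has_derivative_add[OF has_derivative_const
        bounded_linear_imp_has_derivative[OF bounded_linear_axis]]
    by simp
  from has_derivative_compose[OF this assms(1)]
  have "((\<lambda>t. f (x + axis k t)) has_derivative (\<lambda>t. L (axis k t))) (at t)" .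
  moreover have "(\<lambda>s. L (axis k s)) = (*) (L (axis k 1))"
  proof
    fix s
    have "axis k s = s *s (axis k 1 :: complex^'n)" by (simp add: vec_eq_iff axis_def)
    then show "L (axis k s) = L (axis k 1) * s" using assms(2)[of s "axis k 1"] by (simp only: mult.commute)
  qed
  ultimately show ?thesis by (simp add: has_field_derivative_def)
qed

lemma mpow_series_deriv_axis:
  "(\<Sum>\<^sub>\<infinity>\<alpha>. a \<alpha> * mmonom_deriv \<alpha> h (axis k 1)) = mpow_series (coeff_deriv k a) h"
proof -
  define up where "up \<beta> = \<beta>(k := Suc (\<beta> k))" for \<beta> :: "'a \<Rightarrow> nat"
  define T where "T = (\<lambda>\<alpha>. a \<alpha> * mmonom_deriv \<alpha> h (axis k 1))"
  have inj: "inj up"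
  proof (rule injI)
    fix \<beta> \<beta>' assume "up \<beta> = up \<beta>'"
    then show "\<beta> = \<beta>'" unfolding up_def by (metis fun_upd_apply Suc_inject ext)
  qed
  have T0: "T \<alpha> = 0" if "\<alpha> \<notin> range up" for \<alpha>
  proof -
    have "\<alpha> k = 0"
    proof (rule ccontr)
      assume "\<alpha> k \<noteq> 0"
      then have "\<alpha> = up (\<alpha>(k := \<alpha> k - 1))" by (auto simp: up_def fun_eq_iff)
      then show False using that by blast
    qed
    then show ?thesis by (simp add: T_def mmonom_deriv_axis)
  qed
  have "infsum T UNIV = infsum T (range up)" by (rule infsum_cong_neutral) (use T0 in auto)
  also have "\<dots> = infsum (T \<circ> up) UNIV" by (rule infsum_reindex[OF inj])
  also have "\<dots> = mpow_series (coeff_deriv k a) h"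
    unfolding mpow_series_def
    by (rule infsum_cong) (simp add: T_def up_def mmonom_deriv_axis_Suc coeff_deriv_def)
  finally show ?thesis by (simp only: T_def)
qed

lemma mpow_expansion_has_derivative:
  assumes f: "mpow_expansion f p a r" and x: "x \<in> polydisc p r"
  shows "(f has_derivative (\<lambda>v. \<Sum>\<^sub>\<infinity>\<alpha>. a \<alpha> * mmonom_deriv \<alpha> (x - p) v)) (at x)"
proof -
  have r: "0 < r"
    and bound: "\<And>\<rho>. 0 < \<rho> \<Longrightarrow> \<rho> < r \<Longrightarrow> \<exists>M. \<forall>\<alpha>. norm (a \<alpha>) * \<rho> ^ mdeg \<alpha> \<le> M"
    and eq: "\<And>h. (\<forall>i. norm (h$i) < r) \<Longrightarrow> f (p + h) = mpow_series a h"
    using f unfolding mpow_expansion_def by auto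
  have "norm ((x - p)$i) < r" for i using x by (simp add: polydisc_def)
  then obtain s where s: "0 \<le> s" "s < r" "\<And>i. norm ((x - p)$i) \<le> s"
    using max_norm_coord_less by metis
  define \<rho> where "\<rho> = (s + r) / 2"
  have \<rho>: "0 < \<rho>" "\<rho> < r" "s < \<rho>" using s by (auto simp: \<rho>_def)
  obtain M where M: "\<And>\<alpha>. norm (a \<alpha>) * \<rho> ^ mdeg \<alpha> \<le> M" using bound[OF \<rho>(1,2)] by blast
  have "norm ((x - p)$i) < \<rho>" for i using s(3)[of i] \<rho>(3) by linarith
  then have "(mpow_series a has_derivative (\<lambda>v. \<Sum>\<^sub>\<infinity>\<alpha>. a \<alpha> * mmonom_deriv \<alpha> (x - p) v)) (at (x - p))"
    by (rule mpow_series_has_derivative[OF M \<rho>(1)])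
  moreover have "((\<lambda>y. y - p) has_derivative (\<lambda>v. v)) (at x)" by (auto intro!: derivative_eq_intros)
  ultimately have "((\<lambda>y. mpow_series a (y - p)) has_derivative
      (\<lambda>v. \<Sum>\<^sub>\<infinity>\<alpha>. a \<alpha> * mmonom_deriv \<alpha> (x - p) v)) (at x)"
    using has_derivative_compose[of "\<lambda>y. y - p" "\<lambda>v. v" x UNIV] by blast
  then show ?thesis
  proof (rule has_derivative_transform_within_open[OF _ open_polydisc x])
    show "mpow_series a (y - p) = f y" if "y \<in> polydisc p r" for y
      using eq[of "y - p"] that by (auto simp: polydisc_def)
  qed
qed

lemma mpow_series_deriv_scale:
  "(\<Sum>\<^sub>\<infinity>\<alpha>. a \<alpha> * mmonom_deriv \<alpha> h (c *s v)) = c * (\<Sum>\<^sub>\<infinity>\<alpha>. a \<alpha> * mmonom_deriv \<alpha> h v)"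
proof -
  have "(\<Sum>\<^sub>\<infinity>\<alpha>. a \<alpha> * mmonom_deriv \<alpha> h (c *s v)) = (\<Sum>\<^sub>\<infinity>\<alpha>. c * (a \<alpha> * mmonom_deriv \<alpha> h v))"
    by (simp add: mmonom_deriv_scale algebra_simps)
  also have "\<dots> = c * (\<Sum>\<^sub>\<infinity>\<alpha>. a \<alpha> * mmonom_deriv \<alpha> h v)" by (rule infsum_cmult_right')
  finally show ?thesis .
qed

lemma holo_on_polydisc_mpow_expansion:
  assumes "mpow_expansion f p a r"
  shows "holo_on (polydisc p r) f"
  unfolding holo_on_def
proof
  fix x assume "x \<in> polydisc p r"
  show "\<exists>L. (f has_derivative L) (at x) \<and> (\<forall>c v. L (c *s v) = c * L v)"
    using mpow_expansion_has_derivative[OF assms \<open>x \<in> polydisc p r\<close>] mpow_series_deriv_scale by blast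
qed

lemma coeff_deriv_cauchy_bound:
  assumes "mpow_expansion f p a r" "0 < \<rho>" "\<rho> < r"
  shows "\<exists>M. \<forall>\<beta>. norm (coeff_deriv k a \<beta>) * \<rho> ^ mdeg \<beta> \<le> M"
proof -
  define \<rho>' where "\<rho>' = (\<rho> + r) / 2"
  have \<rho>': "0 < \<rho>'" "\<rho>' < r" "\<rho> < \<rho>'" using assms by (auto simp: \<rho>'_def)
  obtain M where M: "\<And>\<alpha>. norm (a \<alpha>) * \<rho>' ^ mdeg \<alpha> \<le> M"
    using assms(1) \<rho>' unfolding mpow_expansion_def by blast
  have M0: "0 \<le> M" using cauchy_bound_nonneg[OF M] \<rho>' by simp
  define t where "t = \<rho> / \<rho>'"
  have t: "0 \<le> t" "t < 1" using assms \<rho>' by (auto simp: t_def)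
  obtain C where C: "\<And>d::nat. real (d + 1) * t ^ d \<le> C" using linear_times_power_bounded[OF t] by blast
  show ?thesis
  proof (intro exI allI)
    fix \<beta> :: "'a \<Rightarrow> nat"
    define d where "d = mdeg \<beta>"
    have a_le: "norm (a (\<beta>(k := Suc (\<beta> k)))) \<le> M / \<rho>' ^ Suc d"
      using M[of "\<beta>(k := Suc (\<beta> k))"] \<rho>' by (simp add: mdeg_fun_upd_Suc d_def field_simps del: power_Suc)
    have "norm (coeff_deriv k a \<beta>) * \<rho> ^ mdeg \<beta> =
        real (Suc (\<beta> k)) * norm (a (\<beta>(k := Suc (\<beta> k)))) * \<rho> ^ d"
      by (simp add: coeff_deriv_def norm_mult d_def del: of_nat_Suc)
    also have "\<dots> \<le> real (d + 1) * (M / \<rho>' ^ Suc d) * \<rho> ^ d"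
      by (intro mult_right_mono mult_mono a_le) (use mdeg_le[of \<beta> k] assms in \<open>auto simp: d_def\<close>)
    also have "\<dots> = M / \<rho>' * (real (d + 1) * t ^ d)"
      using \<rho>' by (simp add: t_def field_simps)
    also have "\<dots> \<le> M / \<rho>' * C" by (intro mult_left_mono C) (use M0 \<rho>' in auto)
    finally show "norm (coeff_deriv k a \<beta>) * \<rho> ^ mdeg \<beta> \<le> M / \<rho>' * C" .
  qed
qed

lemma mpow_expansion_cpartial:
  assumes "mpow_expansion f p a r"
  shows "mpow_expansion (cpartial k f) p (coeff_deriv k a) r"
  unfolding mpow_expansion_def
proof (intro conjI allI impI)
  show "0 < r" using assms by (simp add: mpow_expansion_def)
  show "\<exists>M. \<forall>\<beta>. norm (coeff_deriv k a \<beta>) * \<rho> ^ mdeg \<beta> \<le> M" if "0 < \<rho> \<and> \<rho> < r" for \<rho>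
    using coeff_deriv_cauchy_bound[OF assms] that by blast
  fix h :: "complex^'a" assume "\<forall>i. norm (h$i) < r"
  then have x: "p + h \<in> polydisc p r" by (simp add: polydisc_def)
  have "((\<lambda>t. f (p + h + axis k t)) has_field_derivative
      (\<Sum>\<^sub>\<infinity>\<alpha>. a \<alpha> * mmonom_deriv \<alpha> h (axis k 1))) (at 0)"
  proof (rule has_field_derivative_along_axis)
    have shift: "p + h + axis k 0 = p + h" by (simp add: vec_eq_iff axis_def)
    have "(f has_derivative (\<lambda>v. \<Sum>\<^sub>\<infinity>\<alpha>. a \<alpha> * mmonom_deriv \<alpha> h v)) (at (p + h))"
      using mpow_expansion_has_derivative[OF assms x] by simp
    then show "(f has_derivative (\<lambda>v. \<Sum>\<^sub>\<infinity>\<alpha>. a \<alpha> * mmonom_deriv \<alpha> h v)) (at (p + h + axis k 0))"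
      unfolding shift .
  qed (rule mpow_series_deriv_scale)
  then have "cpartial k f (p + h) = (\<Sum>\<^sub>\<infinity>\<alpha>. a \<alpha> * mmonom_deriv \<alpha> h (axis k 1))"
    unfolding cpartial_def by (rule DERIV_imp_deriv)
  then show "cpartial k f (p + h) = mpow_series (coeff_deriv k a) h"
    by (simp add: mpow_series_deriv_axis)
qed

lemma mpow_expansion_cpartials:
  "mpow_expansion f p a r \<Longrightarrow> mpow_expansion (cpartials ks f) p (coeff_derivs ks a) r"
  by (induction ks) (auto intro: mpow_expansion_cpartial)

lemma mpow_expansion_center: "mpow_expansion f p a r \<Longrightarrow> f p = a (\<lambda>_. 0)"
  unfolding mpow_expansion_def using mpow_series_at_0[of a] by (metis add.right_neutral norm_zero zero_index)

lemma mpow_expansionI: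
  assumes "0 < r" "\<And>\<alpha>. norm (a \<alpha>) * r ^ mdeg \<alpha> \<le> M"
    and "\<And>h. (\<forall>i. norm (h$i) < r) \<Longrightarrow> f (p + h) = mpow_series a h"
  shows "mpow_expansion f p a r"
  unfolding mpow_expansion_def
proof (intro conjI allI impI)
  fix \<rho> assume \<rho>: "0 < \<rho> \<and> \<rho> < r"
  have "norm (a \<alpha>) * \<rho> ^ mdeg \<alpha> \<le> M" for \<alpha>
    using assms(2)[of \<alpha>] \<rho> by (meson mult_left_mono norm_ge_zero order.trans power_mono less_imp_le)
  then show "\<exists>M. \<forall>\<alpha>. norm (a \<alpha>) * \<rho> ^ mdeg \<alpha> \<le> M" by blast
qed (use assms in auto)

lemma prod_fact_ratio_fun_upd_Suc:
  fixes \<alpha> c :: "'n::finite \<Rightarrow> nat" and k :: 'n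
  defines "\<alpha>' \<equiv> \<alpha>(k := Suc (\<alpha> k))" and "c' \<equiv> c(k := Suc (c k))"
  shows "of_nat (Suc (\<alpha> k)) * (\<Prod>i\<in>UNIV. of_nat (fact (\<alpha>' i + c i)) / of_nat (fact (\<alpha>' i)) :: complex)
    = (\<Prod>i\<in>UNIV. of_nat (fact (\<alpha> i + c' i)) / of_nat (fact (\<alpha> i)))"
proof -
  have rest: "(\<Prod>i\<in>UNIV-{k}. of_nat (fact (\<alpha>' i + c i)) / of_nat (fact (\<alpha>' i)) :: complex)
      = (\<Prod>i\<in>UNIV-{k}. of_nat (fact (\<alpha> i + c' i)) / of_nat (fact (\<alpha> i)))"
    by (rule prod.cong) (auto simp: \<alpha>'_def c'_def)
  have "fact (\<alpha>' k) = (of_nat (Suc (\<alpha> k)) * fact (\<alpha> k) :: complex)"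
    and "\<alpha>' k + c k = \<alpha> k + c' k"
    by (simp_all add: \<alpha>'_def c'_def)
  then have at_k: "of_nat (Suc (\<alpha> k)) * (of_nat (fact (\<alpha>' k + c k)) / of_nat (fact (\<alpha>' k)) :: complex)
      = of_nat (fact (\<alpha> k + c' k)) / of_nat (fact (\<alpha> k))"
    by (simp add: field_simps del: of_nat_Suc)
  have "(\<Prod>i\<in>UNIV. of_nat (fact (\<alpha>' i + c i)) / of_nat (fact (\<alpha>' i)) :: complex) =
      of_nat (fact (\<alpha>' k + c k)) / of_nat (fact (\<alpha>' k)) *
      (\<Prod>i\<in>UNIV-{k}. of_nat (fact (\<alpha>' i + c i)) / of_nat (fact (\<alpha>' i)))"
    and "(\<Prod>i\<in>UNIV. of_nat (fact (\<alpha> i + c' i)) / of_nat (fact (\<alpha> i)) :: complex) =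
      of_nat (fact (\<alpha> k + c' k)) / of_nat (fact (\<alpha> k)) *
      (\<Prod>i\<in>UNIV-{k}. of_nat (fact (\<alpha> i + c' i)) / of_nat (fact (\<alpha> i)))"
    by (rule prod.remove, simp, simp)+
  then show ?thesis unfolding rest at_k[symmetric] by (simp only: mult.assoc)
qed

lemma coeff_derivs_eq:
  "coeff_derivs ks a \<alpha> =
    (\<Prod>i\<in>UNIV. of_nat (fact (\<alpha> i + count_list ks i)) / of_nat (fact (\<alpha> i))) * a (\<lambda>i. \<alpha> i + count_list ks i)"
proof (induction ks arbitrary: \<alpha>)
  case (Cons k ks)
  define \<alpha>' where "\<alpha>' = \<alpha>(k := Suc (\<alpha> k))"
  have count: "count_list (k # ks) = (count_list ks)(k := Suc (count_list ks k))"
    by (auto simp: fun_eq_iff)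
  have shift: "(\<lambda>i. \<alpha>' i + count_list ks i) = (\<lambda>i. \<alpha> i + count_list (k # ks) i)"
    by (auto simp: \<alpha>'_def fun_eq_iff)
  have "coeff_derivs (k # ks) a \<alpha> = of_nat (Suc (\<alpha> k)) * coeff_derivs ks a \<alpha>'"
    by (simp add: coeff_deriv_def \<alpha>'_def del: of_nat_Suc)
  also have "\<dots> = of_nat (Suc (\<alpha> k)) *
      (\<Prod>i\<in>UNIV. of_nat (fact (\<alpha>' i + count_list ks i)) / of_nat (fact (\<alpha>' i))) *
      a (\<lambda>i. \<alpha>' i + count_list ks i)"
    by (simp add: Cons.IH del: of_nat_Suc)
  also have "\<dots> = (\<Prod>i\<in>UNIV. of_nat (fact (\<alpha> i + count_list (k # ks) i)) / of_nat (fact (\<alpha> i))) *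
      a (\<lambda>i. \<alpha> i + count_list (k # ks) i)"
  proof -
    have "of_nat (Suc (\<alpha> k)) * (\<Prod>i\<in>UNIV. of_nat (fact (\<alpha>' i + count_list ks i)) / of_nat (fact (\<alpha>' i)))
        = (\<Prod>i\<in>UNIV. of_nat (fact (\<alpha> i + count_list (k # ks) i)) / of_nat (fact (\<alpha> i)) :: complex)"
      unfolding \<alpha>'_def count by (rule prod_fact_ratio_fun_upd_Suc)
    then show ?thesis by (simp only: shift)
  qed
  finally show ?case .
qed simp

lemma count_list_mlist: "count_list (mlist (\<alpha>::'n::finite \<Rightarrow> nat)) i = \<alpha> i"
proof -
  obtain xs :: "'n list" where xs: "set xs = UNIV" "distinct xs"
    using finite_distinct_list[of "UNIV::'n set"] by auto
  have count_concat:
    "count_list (concat (map (\<lambda>i. replicate (\<alpha> i) i) ys)) j = (if j \<in> set ys then \<alpha> j else 0)"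
    if "distinct ys" for ys j
  proof (use that in \<open>induction ys\<close>)
    case (Cons y ys)
    have "count_list (replicate n y) j = (if y = j then n else 0)" for n by (induction n) auto
    with Cons show ?case by auto
  qed simp
  have "\<exists>l. \<forall>i. count_list l i = \<alpha> i"
    by (rule exI[of _ "concat (map (\<lambda>i. replicate (\<alpha> i) i) xs)"]) (simp add: count_concat xs)
  then show ?thesis unfolding mlist_def by (rule someI_ex[where P="\<lambda>l. \<forall>i. count_list l i = \<alpha> i", THEN spec])
qed

lemma mlist_zero: "mlist (\<lambda>_::'n::finite. 0) = []"
proof (cases "mlist (\<lambda>_::'n. 0)")
  case (Cons x xs)
  then show ?thesis using count_list_mlist[of "\<lambda>_::'n. 0" x] by simp
qed simp

lemma tcoef_mpow_expansion:
  assumes "mpow_expansion f p a r"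
  shows "tcoef \<alpha> f p = a \<alpha>"
proof -
  have "cpartials (mlist \<alpha>) f p = coeff_derivs (mlist \<alpha>) a (\<lambda>_. 0)"
    by (rule mpow_expansion_center[OF mpow_expansion_cpartials[OF assms]])
  also have "\<dots> = (\<Prod>i\<in>UNIV. of_nat (fact (\<alpha> i))) * a \<alpha>"
    by (simp add: coeff_derivs_eq count_list_mlist)
  finally show ?thesis unfolding tcoef_def by simp
qed

lemma cpartials_mpow_expansion:
  assumes "mpow_expansion f p a r" "\<And>i. norm (h$i) < r"
  shows "cpartials ks f (p + h) = mpow_series (coeff_derivs ks a) h"
  using mpow_expansion_cpartials[OF assms(1), of ks] assms(2) unfolding mpow_expansion_def by blast

section \<open>Osgood's lemma\<close>

definition vec_upd :: "complex^'n::finite \<Rightarrow> 'n \<Rightarrow> complex \<Rightarrow> complex^'n" where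
  "vec_upd x i w = (\<chi> j. if j = i then w else x$j)"

lemma vec_upd_nth [simp]: "(vec_upd x i w)$j = (if j = i then w else x$j)"
  by (simp add: vec_upd_def)

lemma vec_upd_same [simp]: "vec_upd (vec_upd x k w') k w = vec_upd x k w"
  by (simp add: vec_eq_iff)

lemma vec_upd_comm: "i \<noteq> k \<Longrightarrow> vec_upd (vec_upd x i u) k w = vec_upd (vec_upd x k w) i u"
  by (simp add: vec_eq_iff)

lemma vec_upd_self [simp]: "vec_upd x k (x$k) = x"
  by (simp add: vec_eq_iff)

lemma continuous_on_vec_upd:
  fixes X :: "'a::topological_space \<Rightarrow> complex^'n::finite"
  assumes "continuous_on S X" "continuous_on S W"
  shows "continuous_on S (\<lambda>z. vec_upd (X z) k (W z))"
  unfolding vec_upd_def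
proof (intro continuous_on_vec_lambda)
  fix j
  show "continuous_on S (\<lambda>z. if j = k then W z else X z $ j)"
    by (cases "j = k") (auto intro: continuous_on_component assms)
qed

definition cpolydisc :: "complex^'n::finite \<Rightarrow> real \<Rightarrow> (complex^'n) set" where
  "cpolydisc p R = {x. \<forall>i. norm (x$i - p$i) \<le> R}"

lemma cpolydisc_subset_cball: "cpolydisc p R \<subseteq> cball (p::complex^'n::finite) (real CARD('n) * R)"
proof
  fix x assume x: "x \<in> cpolydisc p R"
  have "norm (x - p) \<le> (\<Sum>i\<in>UNIV. norm ((x - p)$i))" unfolding norm_vec_def by (rule L2_set_le_sum) auto
  also have "\<dots> \<le> (\<Sum>i\<in>(UNIV::'n set). R)" by (intro sum_mono) (use x in \<open>auto simp: cpolydisc_def\<close>)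
  finally show "x \<in> cball p (real CARD('n) * R)" by (simp add: dist_norm norm_minus_commute)
qed

lemma compact_cpolydisc: "compact (cpolydisc (p::complex^'n::finite) R)"
proof -
  have "cpolydisc p R = (\<Inter>i\<in>UNIV. {x. norm (x$i - p$i) \<le> R})" by (auto simp: cpolydisc_def)
  moreover have "closed {x::complex^'n. norm (x$i - p$i) \<le> R}" for i
    by (intro closed_Collect_le continuous_intros linear_continuous_on[OF bounded_linear_vec_nth])
  ultimately have "closed (cpolydisc p R)" by auto
  moreover have "bounded (cpolydisc p R)" using cpolydisc_subset_cball bounded_cball bounded_subset by blast
  ultimately show ?thesis by (simp add: compact_eq_bounded_closed)
qed

lemma vec_upd_in_cpolydisc: "x \<in> cpolydisc p R \<Longrightarrow> norm (w - p$k) \<le> R \<Longrightarrow> vec_upd x k w \<in> cpolydisc p R"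
  by (auto simp: cpolydisc_def)

lemma center_in_cpolydisc: "0 \<le> R \<Longrightarrow> p \<in> cpolydisc p R"
  by (auto simp: cpolydisc_def)

lemma continuous_on_contour_integral_param:
  fixes \<Phi> :: "'a::metric_space \<Rightarrow> complex \<Rightarrow> complex"
  assumes K: "compact K" and R: "0 < R"
    and cont: "continuous_on (K \<times> sphere c R) (\<lambda>z. \<Phi> (fst z) (snd z))"
  shows "continuous_on K (\<lambda>x. contour_integral (circlepath c R) (\<Phi> x))"
proof -
  have uc: "uniformly_continuous_on (K \<times> sphere c R) (\<lambda>z. \<Phi> (fst z) (snd z))"
    by (rule compact_uniformly_continuous[OF cont]) (intro compact_Times K compact_sphere)
  have cx: "continuous_on (sphere c R) (\<Phi> x)" if "x \<in> K" for x
  proof -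
    have "continuous_on (sphere c R) (\<lambda>w. (\<lambda>z. \<Phi> (fst z) (snd z)) (x, w))"
      by (rule continuous_on_compose2[OF cont])
        (auto simp: that intro!: continuous_on_Pair continuous_on_const continuous_on_id)
    then show ?thesis by simp
  qed
  have int: "\<Phi> x contour_integrable_on circlepath c R" if "x \<in> K" for x
    by (rule contour_integrable_continuous_circlepath) (use cx[OF that] R in simp)
  show ?thesis
    unfolding continuous_on_iff
  proof (intro ballI allI impI)
    fix x e assume x: "x \<in> K" and e: "(0::real) < e"
    define e' where "e' = e / (4 * pi * R)"
    have e': "0 < e'" using e R by (simp add: e'_def)
    obtain d where d: "d > 0" and dd: "\<And>z z'. z \<in> K \<times> sphere c R \<Longrightarrow> z' \<in> K \<times> sphere c R \<Longrightarrow>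
        dist z' z < d \<Longrightarrow> dist (\<Phi> (fst z') (snd z')) (\<Phi> (fst z) (snd z)) < e'"
      using uc e' unfolding uniformly_continuous_on_def by metis
    show "\<exists>d>0. \<forall>x'\<in>K. dist x' x < d \<longrightarrow>
        dist (contour_integral (circlepath c R) (\<Phi> x')) (contour_integral (circlepath c R) (\<Phi> x)) < e"
    proof (intro exI conjI ballI impI)
      show "d > 0" by (rule d)
      fix x' assume x': "x' \<in> K" and dx: "dist x' x < d"
      have "((\<lambda>w. \<Phi> x' w - \<Phi> x w) has_contour_integral
          (contour_integral (circlepath c R) (\<Phi> x') - contour_integral (circlepath c R) (\<Phi> x))) (circlepath c R)"
        by (intro has_contour_integral_diff has_contour_integral_integral int x x')
      then have "norm (contour_integral (circlepath c R) (\<Phi> x') - contour_integral (circlepath c R) (\<Phi> x))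
          \<le> e' * (2 * pi * R)"
      proof (rule has_contour_integral_bound_circlepath)
        fix w assume "norm (w - c) = R"
        then have w: "w \<in> sphere c R" by (simp add: dist_norm norm_minus_commute)
        have "dist (x', w) (x, w) < d" using dx by (simp add: dist_Pair_Pair)
        then have "dist (\<Phi> x' w) (\<Phi> x w) < e'" using dd[of "(x, w)" "(x', w)"] x x' w by auto
        then show "norm (\<Phi> x' w - \<Phi> x w) \<le> e'" by (simp add: dist_norm)
      qed (use e' R in auto)
      also have "e' * (2 * pi * R) = e / 2" using R by (simp add: e'_def field_simps)
      finally show
        "dist (contour_integral (circlepath c R) (\<Phi> x')) (contour_integral (circlepath c R) (\<Phi> x)) < e"
        using e by (simp add: dist_norm)
    qed
  qed
qed

definition sep_holo_bounded ::
    "(complex^'n::finite \<Rightarrow> complex) \<Rightarrow> complex^'n \<Rightarrow> real \<Rightarrow> real \<Rightarrow> 'n set \<Rightarrow> bool" where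
  "sep_holo_bounded f p R M S \<longleftrightarrow> continuous_on (cpolydisc p R) f \<and> (\<forall>x\<in>cpolydisc p R. norm (f x) \<le> M) \<and>
     (\<forall>i\<in>S. \<forall>x\<in>cpolydisc p R. (\<lambda>w. f (vec_upd x i w)) holomorphic_on ball (p$i) R)"

definition cauchy_coeff ::
    "(complex^'n::finite \<Rightarrow> complex) \<Rightarrow> complex^'n \<Rightarrow> real \<Rightarrow> 'n \<Rightarrow> nat \<Rightarrow> complex^'n \<Rightarrow> complex" where
  "cauchy_coeff f p R k j x =
     contour_integral (circlepath (p$k) R) (\<lambda>w. f (vec_upd x k w) / (w - p$k) ^ Suc j)"

lemma continuous_on_slice:
  assumes "continuous_on (cpolydisc p R) f" "x \<in> cpolydisc p R"
  shows "continuous_on (cball (p$k) R) (\<lambda>w. f (vec_upd x k w))"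
proof (rule continuous_on_compose2[OF assms(1)])
  show "continuous_on (cball (p$k) R) (\<lambda>w. vec_upd x k w)" by (intro continuous_on_vec_upd continuous_intros)
  show "(\<lambda>w. vec_upd x k w) ` cball (p$k) R \<subseteq> cpolydisc p R"
    using assms(2) by (auto intro!: vec_upd_in_cpolydisc simp: dist_norm norm_minus_commute)
qed

lemma cauchy_coeff_integrable:
  assumes "continuous_on (cpolydisc p R) f" "x \<in> cpolydisc p R" "0 < R"
  shows "(\<lambda>w. f (vec_upd x k w) / (w - p$k) ^ Suc j) contour_integrable_on circlepath (p$k) R"
proof (rule contour_integrable_continuous_circlepath)
  have "continuous_on (sphere (p$k) R) (\<lambda>w. f (vec_upd x k w))"
    using continuous_on_slice[OF assms(1,2), of k] by (rule continuous_on_subset) auto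
  then show "continuous_on (path_image (circlepath (p $ k) R)) (\<lambda>w. f (vec_upd x k w) / (w - p $ k) ^ Suc j)"
    by (intro continuous_intros) (use assms(3) in auto)
qed

lemma cauchy_coeff_vec_upd [simp]: "cauchy_coeff f p R k j (vec_upd x k w) = cauchy_coeff f p R k j x"
  by (simp add: cauchy_coeff_def)

lemma continuous_on_cauchy_coeff:
  assumes "continuous_on (cpolydisc p R) f" "0 < R"
  shows "continuous_on (cpolydisc p R) (cauchy_coeff f p R k j)"
  unfolding cauchy_coeff_def[abs_def]
proof (rule continuous_on_contour_integral_param[OF compact_cpolydisc assms(2)])
  have c1: "continuous_on (cpolydisc p R \<times> sphere (p$k) R) (\<lambda>z. f (vec_upd (fst z) k (snd z)))"
  proof (rule continuous_on_compose2[OF assms(1)])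
    show "continuous_on (cpolydisc p R \<times> sphere (p$k) R) (\<lambda>z. vec_upd (fst z) k (snd z))"
      by (intro continuous_on_vec_upd continuous_intros)
    show "(\<lambda>z. vec_upd (fst z) k (snd z)) ` (cpolydisc p R \<times> sphere (p$k) R) \<subseteq> cpolydisc p R"
      by (auto intro!: vec_upd_in_cpolydisc simp: dist_norm norm_minus_commute)
  qed
  show "continuous_on (cpolydisc p R \<times> sphere (p$k) R)
      (\<lambda>z. f (vec_upd (fst z) k (snd z)) / (snd z - p$k) ^ Suc j)"
    by (intro continuous_intros c1) (use assms(2) in auto)
qed

lemma norm_cauchy_coeff_le:
  assumes "sep_holo_bounded f p R M S" "0 < R" "x \<in> cpolydisc p R"
  shows "norm (cauchy_coeff f p R k j x) \<le> M / R ^ j * (2 * pi)"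
proof -
  have hc: "continuous_on (cpolydisc p R) f" and hM: "\<And>y. y \<in> cpolydisc p R \<Longrightarrow> norm (f y) \<le> M"
    using assms(1) by (auto simp: sep_holo_bounded_def)
  have M0: "0 \<le> M" using hM[OF assms(3)] norm_ge_zero order_trans by blast
  have "norm (cauchy_coeff f p R k j x) \<le> M / R ^ Suc j * (2 * pi * R)"
    unfolding cauchy_coeff_def
  proof (rule has_contour_integral_bound_circlepath[OF
        has_contour_integral_integral[OF cauchy_coeff_integrable[OF hc assms(3,2)]]])
    fix w assume w: "norm (w - p$k) = R"
    have "norm (f (vec_upd x k w)) \<le> M" by (rule hM) (use assms(3) w in \<open>auto intro: vec_upd_in_cpolydisc\<close>)
    then show "norm (f (vec_upd x k w) / (w - p$k) ^ Suc j) \<le> M / R ^ Suc j"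
    proof -
      have "norm (f (vec_upd x k w) / (w - p$k) ^ Suc j) = norm (f (vec_upd x k w)) / R ^ Suc j"
        using w by (simp add: norm_divide norm_power del: power_Suc)
      also have "\<dots> \<le> M / R ^ Suc j"
        by (rule divide_right_mono) (use \<open>norm (f (vec_upd x k w)) \<le> M\<close> assms(2) in auto)
      finally show ?thesis .
    qed
  qed (use M0 assms(2) in auto)
  also have "\<dots> = M / R ^ j * (2 * pi)" using assms(2) by (simp add: field_simps)
  finally show ?thesis .
qed

lemma cauchy_coeff_sums:
  assumes "sep_holo_bounded f p R M S" "k \<in> S" "0 < R" "x \<in> cpolydisc p R" "norm (x$k - p$k) < R"
  shows "(\<lambda>n. cauchy_coeff f p R k n x / (2 * pi * \<i>) * (x$k - p$k) ^ n) sums f x"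
proof -
  define g where "g w = f (vec_upd x k w)" for w
  have hc: "continuous_on (cpolydisc p R) f" using assms(1) by (auto simp: sep_holo_bounded_def)
  have holg: "g holomorphic_on ball (p$k) R"
    using assms(1,2,4) by (auto simp: sep_holo_bounded_def g_def[abs_def])
  have contg: "continuous_on (cball (p$k) R) g"
    unfolding g_def[abs_def] by (rule continuous_on_slice[OF hc assms(4)])
  have xk: "x$k \<in> ball (p$k) R" using assms(5) by (simp add: dist_norm norm_minus_commute)
  have pk: "p$k \<in> ball (p$k) R" using assms(3) by simp
  have "(\<lambda>n. (deriv ^^ n) g (p$k) / fact n * (x$k - p$k) ^ n) sums g (x$k)"
    by (rule holomorphic_power_series[OF holg xk])
  moreover have "(deriv ^^ n) g (p$k) / fact n = cauchy_coeff f p R k n x / (2 * pi * \<i>)" for n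
  proof -
    have "(deriv ^^ n) g (p$k) =
        fact n / (2 * pi * \<i>) * contour_integral (circlepath (p$k) R) (\<lambda>u. g u / (u - p$k) ^ Suc n)"
      by (rule Cauchy_higher_derivative_integral_circlepath(2)[OF contg holg pk])
    then show ?thesis by (simp add: cauchy_coeff_def g_def)
  qed
  ultimately show ?thesis by (simp add: g_def)
qed

lemma continuous_on_vector_derivative_circlepath:
  "continuous_on {0..1} (\<lambda>t. vector_derivative (circlepath c r) (at t))"
  unfolding vector_derivative_circlepath by (intro continuous_intros)

lemma continuous_on_cauchy_coeff_slice:
  assumes "continuous_on (cpolydisc p R) f" "0 < R" "x \<in> cpolydisc p R"
  shows "continuous_on (cball (p$i) R) (\<lambda>u. cauchy_coeff f p R k j (vec_upd x i u))"
proof (rule continuous_on_compose2[OF continuous_on_cauchy_coeff[OF assms(1,2)]])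
  show "continuous_on (cball (p$i) R) (\<lambda>u. vec_upd x i u)"
    by (intro continuous_on_vec_upd continuous_intros)
  show "(\<lambda>u. vec_upd x i u) ` cball (p$i) R \<subseteq> cpolydisc p R"
    using assms(3) by (auto intro!: vec_upd_in_cpolydisc simp: dist_norm norm_minus_commute)
qed

text \<open>Fubini for the two circle integrals and Cauchy's formula in the variable i give Cauchy's
  formula for the slice of the coefficient.\<close>

lemma cauchy_coeff_slice_cauchy_integral:
  fixes j :: nat
  assumes hyp: "sep_holo_bounded f p R M S" and i: "i \<in> S" "i \<noteq> k" and R: "0 < R"
    and x: "x \<in> cpolydisc p R" and z: "z \<in> ball (p$i) R"
  defines "G \<equiv> \<lambda>u. cauchy_coeff f p R k j (vec_upd x i u)"
  shows "((\<lambda>u. G u / (u - z)) has_contour_integral (2 * pi * \<i> * G z)) (circlepath (p$i) R)"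
proof -
  have hc: "continuous_on (cpolydisc p R) f" using hyp by (simp add: sep_holo_bounded_def)
  have hol: "\<And>y. y \<in> cpolydisc p R \<Longrightarrow> (\<lambda>w. f (vec_upd y i w)) holomorphic_on ball (p$i) R"
    using hyp i by (auto simp: sep_holo_bounded_def)
  have inS: "vec_upd x i u \<in> cpolydisc p R" if "u \<in> cball (p$i) R" for u
    using that x by (auto intro!: vec_upd_in_cpolydisc simp: dist_norm norm_minus_commute)
  have contGs: "continuous_on (sphere (p$i) R) G"
    unfolding G_def by (rule continuous_on_subset[OF continuous_on_cauchy_coeff_slice[OF hc R x]]) auto
  define \<Phi> where "\<Phi> u w = f (vec_upd (vec_upd x i u) k w) / (w - p$k) ^ Suc j / (u - z)" for u w
  have zns: "u - z \<noteq> 0" if "u \<in> sphere (p$i) R" for u using that z by (auto simp: dist_norm)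
  have int1: "(\<lambda>u. G u / (u - z)) contour_integrable_on circlepath (p$i) R"
    by (rule contour_integrable_continuous_circlepath)
      (use R zns in \<open>auto intro!: continuous_on_divide contGs continuous_on_diff continuous_on_id
        continuous_on_const\<close>)
  have e1: "contour_integral (circlepath (p$i) R) (\<lambda>u. G u / (u - z)) =
      contour_integral (circlepath (p$i) R) (\<lambda>u. contour_integral (circlepath (p$k) R) (\<Phi> u))"
  proof (rule contour_integral_eq)
    fix u assume u: "u \<in> path_image (circlepath (p$i) R)"
    then have "vec_upd x i u \<in> cpolydisc p R" using R by (intro inS) auto
    then show "G u / (u - z) = contour_integral (circlepath (p$k) R) (\<Phi> u)"
      unfolding G_def cauchy_coeff_def \<Phi>_def
      by (rule contour_integral_div[OF cauchy_coeff_integrable[OF hc _ R], symmetric])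
  qed
  have e2: "contour_integral (circlepath (p$i) R) (\<lambda>u. contour_integral (circlepath (p$k) R) (\<Phi> u)) =
      contour_integral (circlepath (p$k) R) (\<lambda>w. contour_integral (circlepath (p$i) R) (\<lambda>u. \<Phi> u w))"
  proof (rule contour_integral_swap)
    have c1: "continuous_on (sphere (p$i) R \<times> sphere (p$k) R)
        (\<lambda>y. f (vec_upd (vec_upd x i (fst y)) k (snd y)))"
    proof (rule continuous_on_compose2[OF hc])
      show "continuous_on (sphere (p$i) R \<times> sphere (p$k) R) (\<lambda>y. vec_upd (vec_upd x i (fst y)) k (snd y))"
        by (intro continuous_on_vec_upd continuous_intros)
      show "(\<lambda>y. vec_upd (vec_upd x i (fst y)) k (snd y)) ` (sphere (p$i) R \<times> sphere (p$k) R) \<subseteq> cpolydisc p R"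
        using x by (auto intro!: vec_upd_in_cpolydisc simp: dist_norm norm_minus_commute)
    qed
    have "continuous_on (sphere (p$i) R \<times> sphere (p$k) R) (\<lambda>y. \<Phi> (fst y) (snd y))"
      unfolding \<Phi>_def by (intro continuous_intros c1) (use R zns in auto)
    then show "continuous_on (path_image (circlepath (p$i) R) \<times> path_image (circlepath (p$k) R))
        (\<lambda>(y1, y2). \<Phi> y1 y2)"
      using R by (simp add: case_prod_unfold)
  qed (auto intro: continuous_on_vector_derivative_circlepath)
  have e3: "contour_integral (circlepath (p$i) R) (\<lambda>u. \<Phi> u w) =
      2 * pi * \<i> * (f (vec_upd (vec_upd x i z) k w) / (w - p$k) ^ Suc j)"
    if w: "w \<in> path_image (circlepath (p$k) R)" for w
  proof -
    define y where "y = vec_upd x k w"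
    have y: "y \<in> cpolydisc p R"
      unfolding y_def using w x R by (auto intro!: vec_upd_in_cpolydisc simp: dist_norm norm_minus_commute)
    have "((\<lambda>u. f (vec_upd y i u) / (u - z)) has_contour_integral (2 * of_real pi * \<i> * f (vec_upd y i z)))
        (circlepath (p$i) R)"
      by (rule Cauchy_integral_circlepath[OF continuous_on_slice[OF hc y] hol[OF y]])
        (use z in \<open>simp add: dist_norm norm_minus_commute\<close>)
    then have "((\<lambda>u. f (vec_upd y i u) / (u - z) / (w - p$k) ^ Suc j) has_contour_integral
        (2 * of_real pi * \<i> * f (vec_upd y i z) / (w - p$k) ^ Suc j)) (circlepath (p$i) R)"
      by (rule has_contour_integral_div)
    moreover have "\<Phi> u w = f (vec_upd y i u) / (u - z) / (w - p$k) ^ Suc j" for u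
      unfolding \<Phi>_def y_def using vec_upd_comm[OF i(2), of x u w] by simp
    moreover have "vec_upd y i z = vec_upd (vec_upd x i z) k w"
      unfolding y_def using vec_upd_comm[OF i(2)] by simp
    ultimately show ?thesis by (simp add: contour_integral_unique)
  qed
  have e4: "contour_integral (circlepath (p$k) R) (\<lambda>w. contour_integral (circlepath (p$i) R) (\<lambda>u. \<Phi> u w)) =
      2 * pi * \<i> * G z"
  proof -
    have "contour_integral (circlepath (p$k) R) (\<lambda>w. contour_integral (circlepath (p$i) R) (\<lambda>u. \<Phi> u w)) =
        contour_integral (circlepath (p$k) R)
          (\<lambda>w. 2 * pi * \<i> * (f (vec_upd (vec_upd x i z) k w) / (w - p$k) ^ Suc j))"
      by (rule contour_integral_eq) (rule e3)
    also have "\<dots> = 2 * pi * \<i> * G z"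
      unfolding G_def cauchy_coeff_def
      by (rule contour_integral_lmul[OF cauchy_coeff_integrable[OF hc inS R]]) (use z in auto)
    finally show ?thesis .
  qed
  have "contour_integral (circlepath (p$i) R) (\<lambda>u. G u / (u - z)) = 2 * pi * \<i> * G z"
    using e1 e2 e4 by simp
  then show ?thesis using has_contour_integral_integral[OF int1] by simp
qed

lemma holomorphic_on_cauchy_coeff:
  assumes hyp: "sep_holo_bounded f p R M S" and i: "i \<in> S" "i \<noteq> k" and R: "0 < R"
    and x: "x \<in> cpolydisc p R"
  shows "(\<lambda>u. cauchy_coeff f p R k j (vec_upd x i u)) holomorphic_on ball (p$i) R"
proof -
  define G where "G u = cauchy_coeff f p R k j (vec_upd x i u)" for u
  have hc: "continuous_on (cpolydisc p R) f" using hyp by (simp add: sep_holo_bounded_def)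
  have contGs: "continuous_on (sphere (p$i) R) G"
    unfolding G_def by (rule continuous_on_subset[OF continuous_on_cauchy_coeff_slice[OF hc R x]]) auto
  have "(\<lambda>w. 2 * pi * \<i> * G w) holomorphic_on ball (p$i) R"
  proof (subst holomorphic_on_open[OF open_ball], intro ballI exI)
    fix w assume w: "w \<in> ball (p$i) R"
    have "((\<lambda>u. G u / (u - z) ^ 1) has_contour_integral (2 * pi * \<i> * G z)) (circlepath (p$i) R)"
      if "z \<in> ball (p$i) R" for z
      using cauchy_coeff_slice_cauchy_integral[OF hyp i R x that] by (simp add: G_def)
    then show "((\<lambda>w. 2 * pi * \<i> * G w) has_field_derivative
        (of_nat 1 * contour_integral (circlepath (p$i) R) (\<lambda>u. G u / (u - w) ^ Suc 1))) (at w)"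
      by (intro Cauchy_next_derivative_circlepath(2)[where f=G and z="p$i" and r=R and k=1, OF _ _ _ w])
        (use contGs R in auto)
  qed
  then have "(\<lambda>w. (2 * pi * \<i> * G w) / (2 * pi * \<i>)) holomorphic_on ball (p$i) R"
    by (rule holomorphic_on_divide[OF _ holomorphic_on_const]) auto
  then show ?thesis by (simp add: G_def[abs_def])
qed

definition bounded_expansion_along ::
    "(complex^'n::finite \<Rightarrow> complex) \<Rightarrow> complex^'n \<Rightarrow> real \<Rightarrow> real \<Rightarrow> 'n set \<Rightarrow> bool" where
  "bounded_expansion_along f p R M S \<longleftrightarrow> (\<exists>a. (\<forall>\<alpha>. norm (a \<alpha>) * R ^ mdeg \<alpha> \<le> M) \<and>
     (\<forall>h. (\<forall>i. i \<notin> S \<longrightarrow> h$i = 0) \<longrightarrow> (\<forall>i. norm (h$i) < R) \<longrightarrow> f (p + h) = mpow_series a h))"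

lemma sep_holo_bounded_cauchy_coeff:
  assumes hyp: "sep_holo_bounded f p R M (insert k S)" and k: "k \<notin> S" and R: "0 < R"
  shows "sep_holo_bounded (\<lambda>x. cauchy_coeff f p R k j x / (2 * pi * \<i>)) p R (M / R ^ j) S"
  unfolding sep_holo_bounded_def
proof (intro conjI ballI)
  have hc: "continuous_on (cpolydisc p R) f" using hyp by (simp add: sep_holo_bounded_def)
  show "continuous_on (cpolydisc p R) (\<lambda>x. cauchy_coeff f p R k j x / (2 * pi * \<i>))"
    by (intro continuous_intros continuous_on_cauchy_coeff[OF hc R]) auto
  fix x assume x: "x \<in> cpolydisc p R"
  have "norm (cauchy_coeff f p R k j x) \<le> M / R ^ j * (2 * pi)" by (rule norm_cauchy_coeff_le[OF hyp R x])
  then show "norm (cauchy_coeff f p R k j x / (2 * pi * \<i>)) \<le> M / R ^ j"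
    by (simp add: norm_divide norm_mult field_simps)
next
  fix i x assume i: "i \<in> S" and x: "x \<in> cpolydisc p R"
  have "(\<lambda>u. cauchy_coeff f p R k j (vec_upd x i u)) holomorphic_on ball (p$i) R"
    by (rule holomorphic_on_cauchy_coeff[OF hyp _ _ R x]) (use i k in auto)
  then show "(\<lambda>w. cauchy_coeff f p R k j (vec_upd x i w) / (2 * pi * \<i>)) holomorphic_on ball (p$i) R"
    by (rule holomorphic_on_divide[OF _ holomorphic_on_const]) auto
qed

lemma mmonom_remove:
  fixes h :: "complex^'n::finite"
  shows "mmonom \<alpha> h = mmonom (\<alpha>(k := 0)) (vec_upd h k 0) * (h$k) ^ (\<alpha> k)"
proof -
  have "mmonom \<alpha> h = (h$k) ^ (\<alpha> k) * (\<Prod>j\<in>UNIV-{k}. (h$j) ^ (\<alpha> j))"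
    unfolding mmonom_def by (rule prod.remove) auto
  moreover have "mmonom (\<alpha>(k := 0)) (vec_upd h k 0) = (\<Prod>j\<in>UNIV-{k}. (h$j) ^ (\<alpha> j))"
  proof -
    have "mmonom (\<alpha>(k := 0)) (vec_upd h k 0) = ((vec_upd h k 0)$k) ^ ((\<alpha>(k := 0)) k) *
        (\<Prod>j\<in>UNIV-{k}. ((vec_upd h k 0)$j) ^ ((\<alpha>(k := 0)) j))"
      unfolding mmonom_def by (rule prod.remove) auto
    also have "(\<Prod>j\<in>UNIV-{k}. ((vec_upd h k 0)$j) ^ ((\<alpha>(k := 0)) j)) = (\<Prod>j\<in>UNIV-{k}. (h$j) ^ (\<alpha> j))"
      by (rule prod.cong) auto
    also have "((vec_upd h k 0)$k) ^ ((\<alpha>(k := 0)) k) = 1" by simp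
    finally show ?thesis by (simp only: mult_1_left)
  qed
  ultimately show ?thesis by (simp add: mult.commute)
qed

lemma mpow_series_sums_coord:
  fixes A :: "nat \<Rightarrow> ('n::finite \<Rightarrow> nat) \<Rightarrow> complex" and k :: 'n
  defines "a \<equiv> \<lambda>\<alpha>. A (\<alpha> k) (\<alpha>(k := 0))"
  assumes sum: "(\<lambda>\<alpha>. a \<alpha> * mmonom \<alpha> h) summable_on UNIV"
  shows "(\<lambda>n. mpow_series (A n) (vec_upd h k 0) * (h$k) ^ n) sums mpow_series a h"
proof -
  define h' where "h' = vec_upd h k 0"
  define T where "T = (Sigma (UNIV::nat set) (\<lambda>_. {\<beta>::'n \<Rightarrow> nat. \<beta> k = 0}))"
  define G where "G z = A (fst z) (snd z) * mmonom (snd z) h' * (h$k) ^ (fst z)" for z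
  have bij1: "\<And>\<alpha>. \<alpha> \<in> UNIV \<Longrightarrow> (\<lambda>(n, \<beta>). \<beta>(k := n)) ((\<lambda>\<alpha>. (\<alpha> k, \<alpha>(k := 0))) \<alpha>) = \<alpha>" by auto
  have bij2: "\<And>\<alpha>. \<alpha> \<in> UNIV \<Longrightarrow> (\<lambda>\<alpha>. (\<alpha> k, \<alpha>(k := 0))) \<alpha> \<in> T" by (auto simp: T_def)
  have bij3: "\<And>z. z \<in> T \<Longrightarrow> (\<lambda>\<alpha>. (\<alpha> k, \<alpha>(k := 0))) ((\<lambda>(n, \<beta>). \<beta>(k := n)) z) = z"
    by (auto simp: T_def fun_eq_iff)
  have bij4: "\<And>z. z \<in> T \<Longrightarrow> (\<lambda>(n, \<beta>). \<beta>(k := n)) z \<in> UNIV" by auto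
  have bij5: "\<And>\<alpha>. \<alpha> \<in> UNIV \<Longrightarrow> G ((\<lambda>\<alpha>. (\<alpha> k, \<alpha>(k := 0))) \<alpha>) = a \<alpha> * mmonom \<alpha> h"
    by (simp add: G_def a_def h'_def mmonom_remove[of _ h k])
  have "(\<lambda>\<alpha>. a \<alpha> * mmonom \<alpha> h) summable_on UNIV \<longleftrightarrow> G summable_on T"
    by (rule summable_on_reindex_bij_witness[where i="\<lambda>(n,\<beta>). \<beta>(k:=n)" and j="\<lambda>\<alpha>. (\<alpha> k, \<alpha>(k:=0))"])
      (use bij1 bij2 bij3 bij4 bij5 in auto)
  then have sumG: "G summable_on T" using sum by simp
  have eqG: "mpow_series a h = infsum G T"
    unfolding mpow_series_def
    by (rule infsum_reindex_bij_witness[where i="\<lambda>(n,\<beta>). \<beta>(k:=n)" and j="\<lambda>\<alpha>. (\<alpha> k, \<alpha>(k:=0))"])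
      (use bij1 bij2 bij3 bij4 bij5 in auto)
  have inner: "(\<Sum>\<^sub>\<infinity>\<beta>\<in>{\<beta>. \<beta> k = 0}. G (n, \<beta>)) = mpow_series (A n) h' * (h$k) ^ n" for n
  proof -
    have "(\<Sum>\<^sub>\<infinity>\<beta>\<in>{\<beta>. \<beta> k = 0}. G (n, \<beta>)) = (\<Sum>\<^sub>\<infinity>\<beta>\<in>{\<beta>. \<beta> k = 0}. A n \<beta> * mmonom \<beta> h') * (h$k) ^ n"
      unfolding G_def by (simp add: infsum_cmult_left')
    also have "(\<Sum>\<^sub>\<infinity>\<beta>\<in>{\<beta>. \<beta> k = 0}. A n \<beta> * mmonom \<beta> h') = mpow_series (A n) h'"
      unfolding mpow_series_def
      by (rule infsum_cong_neutral) (use mmonom_eq_0[of h' k] in \<open>auto simp: h'_def\<close>)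
    finally show ?thesis .
  qed
  have "(\<lambda>n. \<Sum>\<^sub>\<infinity>\<beta>\<in>{\<beta>. \<beta> k = 0}. G (n, \<beta>)) summable_on UNIV"
    using summable_on_Sigma_banach[of "\<lambda>n \<beta>. G (n, \<beta>)" UNIV "\<lambda>_. {\<beta>. \<beta> k = 0}"] sumG
    by (simp add: T_def case_prod_unfold)
  then have "((\<lambda>n. mpow_series (A n) h' * (h$k) ^ n) has_sum (\<Sum>\<^sub>\<infinity>n. \<Sum>\<^sub>\<infinity>\<beta>\<in>{\<beta>. \<beta> k = 0}. G (n, \<beta>))) UNIV"
    unfolding inner by (rule has_sum_infsum)
  also have "(\<Sum>\<^sub>\<infinity>n. \<Sum>\<^sub>\<infinity>\<beta>\<in>{\<beta>. \<beta> k = 0}. G (n, \<beta>)) = mpow_series a h"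
    unfolding eqG T_def by (rule infsum_Sigma_banach) (use sumG in \<open>simp add: T_def\<close>)
  finally show ?thesis unfolding h'_def by (rule has_sum_imp_sums)
qed

text \<open>The Taylor coefficients of f in the variable k are separately holomorphic in the remaining
  variables, with Cauchy bounds M / R^j, so the induction hypothesis expands each of them.\<close>

lemma osgood_step:
  assumes IH: "\<And>g M'. sep_holo_bounded g p R M' S \<Longrightarrow> bounded_expansion_along g p R M' S"
    and k: "k \<notin> S" and R: "0 < R" and hyp: "sep_holo_bounded f p R M (insert k S)"
  shows "bounded_expansion_along f p R M (insert k S)"
proof -
  define b where "b j x = cauchy_coeff f p R k j x / (2 * pi * \<i>)" for j x
  have "\<forall>j. \<exists>A. (\<forall>\<beta>. norm (A \<beta>) * R ^ mdeg \<beta> \<le> M / R ^ j) \<and>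
      (\<forall>h. (\<forall>i. i \<notin> S \<longrightarrow> h$i = 0) \<longrightarrow> (\<forall>i. norm (h$i) < R) \<longrightarrow> b j (p + h) = mpow_series A h)"
    using IH[OF sep_holo_bounded_cauchy_coeff[OF hyp k R]]
    unfolding b_def bounded_expansion_along_def by blast
  then obtain A where A_le: "\<And>j \<beta>. norm (A j \<beta>) * R ^ mdeg \<beta> \<le> M / R ^ j"
    and A_eq: "\<And>j h. (\<forall>i. i \<notin> S \<longrightarrow> h$i = 0) \<Longrightarrow> (\<forall>i. norm (h$i) < R) \<Longrightarrow> b j (p + h) = mpow_series (A j) h"
    by metis
  define a where "a = (\<lambda>\<alpha>. A (\<alpha> k) (\<alpha>(k := 0)))"
  have a_le: "norm (a \<alpha>) * R ^ mdeg \<alpha> \<le> M" for \<alpha>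
  proof -
    have "norm (a \<alpha>) * R ^ mdeg \<alpha> = (norm (A (\<alpha> k) (\<alpha>(k := 0))) * R ^ mdeg (\<alpha>(k := 0))) * R ^ (\<alpha> k)"
      unfolding a_def by (subst mdeg_remove[of \<alpha> k]) (simp add: power_add)
    also have "\<dots> \<le> M / R ^ (\<alpha> k) * R ^ (\<alpha> k)" by (intro mult_right_mono A_le) (use R in auto)
    also have "\<dots> = M" using R by simp
    finally show ?thesis .
  qed
  show ?thesis
    unfolding bounded_expansion_along_def
  proof (intro exI conjI allI impI)
    show "norm (a \<alpha>) * R ^ mdeg \<alpha> \<le> M" for \<alpha> by (rule a_le)
    fix h :: "complex^'a" assume hS: "\<forall>i. i \<notin> insert k S \<longrightarrow> h$i = 0" and hR: "\<forall>i. norm (h$i) < R"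
    have x: "p + h \<in> cpolydisc p R" using hR by (auto simp: cpolydisc_def less_imp_le)
    have "(\<lambda>n. b n (p + h) * ((p + h)$k - p$k) ^ n) sums f (p + h)"
      unfolding b_def by (rule cauchy_coeff_sums[OF hyp _ R x]) (use hR in auto)
    moreover have "b n (p + h) = mpow_series (A n) (vec_upd h k 0)" for n
    proof -
      have "p + vec_upd h k 0 = vec_upd (p + h) k (p$k)" by (simp add: vec_eq_iff)
      then have "b n (p + h) = b n (p + vec_upd h k 0)" by (simp add: b_def)
      also have "\<dots> = mpow_series (A n) (vec_upd h k 0)" by (rule A_eq) (use hS hR R in auto)
      finally show ?thesis .
    qed
    ultimately have "(\<lambda>n. mpow_series (A n) (vec_upd h k 0) * (h$k) ^ n) sums f (p + h)" by simp
    moreover obtain \<rho> where "\<rho> < R" "\<And>i. norm (h$i) \<le> \<rho>" using max_norm_coord_less hR by metis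
    then have "(\<lambda>\<alpha>. a \<alpha> * mmonom \<alpha> h) summable_on UNIV" by (intro summable_mpow_series[OF a_le R])
    then have "(\<lambda>n. mpow_series (A n) (vec_upd h k 0) * (h$k) ^ n) sums mpow_series a h"
      unfolding a_def by (rule mpow_series_sums_coord)
    ultimately show "f (p + h) = mpow_series a h" using sums_unique2 by blast
  qed
qed

lemma osgood:
  fixes f :: "complex^'n::finite \<Rightarrow> complex"
  assumes "finite S" "0 < R"
  shows "sep_holo_bounded f p R M S \<Longrightarrow> bounded_expansion_along f p R M S"
  using assms(1)
proof (induction S arbitrary: f M rule: finite_induct)
  case empty
  show ?case unfolding bounded_expansion_along_def
  proof (intro exI conjI allI impI)
    define a where "a \<alpha> = (if \<alpha> = (\<lambda>_. 0) then f p else 0)" for \<alpha> :: "'n \<Rightarrow> nat"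
    have "norm (f p) \<le> M"
      using empty.prems center_in_cpolydisc[of R p] assms(2) by (auto simp: sep_holo_bounded_def)
    then have "0 \<le> M" by (meson norm_ge_zero order_trans)
    then show "norm (a \<alpha>) * R ^ mdeg \<alpha> \<le> M" for \<alpha>
      using \<open>norm (f p) \<le> M\<close> by (auto simp: a_def mdeg_def)
    fix h :: "complex^'n" assume "\<forall>i. i \<notin> {} \<longrightarrow> h$i = 0"
    then have "h = 0" by (simp add: vec_eq_iff)
    then show "f (p + h) = mpow_series a h" by (simp add: mpow_series_at_0 a_def)
  qed
next
  case (insert k S)
  show ?case by (rule osgood_step[OF insert.IH insert.hyps(2) assms(2) insert.prems])
qed

lemma vec_upd_eq_add_axis: "vec_upd x i w = vec_upd x i 0 + axis i w"
  by (simp add: vec_eq_iff axis_def)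

lemma holo_on_imp_mpow_expansion:
  assumes U: "open U" "holo_on U f" "p \<in> U"
  shows "\<exists>a R. mpow_expansion f p a R"
proof -
  obtain e where e: "e > 0" "cball p e \<subseteq> U" using open_contains_cball U(1,3) by blast
  define R where "R = e / real CARD('a)"
  have R: "0 < R" using e by (simp add: R_def)
  have cdU: "cpolydisc p R \<subseteq> U" using cpolydisc_subset_cball[of p R] e by (simp add: R_def)
  have der: "\<exists>L. (f has_derivative L) (at y) \<and> (\<forall>c v. L (c *s v) = c * L v)" if "y \<in> U" for y
    using U(2) that by (simp add: holo_on_def)
  have hc: "continuous_on (cpolydisc p R) f"
  proof (rule continuous_at_imp_continuous_on, rule ballI)
    fix y assume "y \<in> cpolydisc p R"
    then obtain L where "(f has_derivative L) (at y)" using der cdU by blast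
    then show "isCont f y" by (rule has_derivative_continuous)
  qed
  have "bounded (f ` cpolydisc p R)"
    by (intro compact_imp_bounded compact_continuous_image hc compact_cpolydisc)
  then obtain M where M: "\<And>y. y \<in> cpolydisc p R \<Longrightarrow> norm (f y) \<le> M" by (auto simp: bounded_iff)
  have hol: "(\<lambda>w. f (vec_upd x i w)) holomorphic_on ball (p$i) R" if x: "x \<in> cpolydisc p R" for x i
    unfolding holomorphic_on_def field_differentiable_def
  proof
    fix w assume w: "w \<in> ball (p$i) R"
    have "vec_upd x i 0 + axis i w \<in> U"
      using x w cdU
      by (auto intro!: vec_upd_in_cpolydisc simp flip: vec_upd_eq_add_axis simp: dist_norm norm_minus_commute)
    then obtain L where "(f has_derivative L) (at (vec_upd x i 0 + axis i w))" "\<And>c v. L (c *s v) = c * L v"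
      using der by blast
    then have "((\<lambda>t. f (vec_upd x i 0 + axis i t)) has_field_derivative L (axis i 1)) (at w)"
      by (rule has_field_derivative_along_axis)
    then show "\<exists>f'. ((\<lambda>w. f (vec_upd x i w)) has_field_derivative f') (at w within ball (p$i) R)"
      by (auto simp flip: vec_upd_eq_add_axis intro: has_field_derivative_at_within)
  qed
  have "sep_holo_bounded f p R M UNIV" unfolding sep_holo_bounded_def using hc M hol by blast
  then have "bounded_expansion_along f p R M UNIV" using osgood[of UNIV R f p M] R by simp
  then obtain a where "\<And>\<alpha>. norm (a \<alpha>) * R ^ mdeg \<alpha> \<le> M"
    and "\<And>h. (\<forall>i. norm (h$i) < R) \<Longrightarrow> f (p + h) = mpow_series a h"
    unfolding bounded_expansion_along_def by auto
  then show ?thesis using mpow_expansionI[OF R] by blast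
qed
section \<open>The Laurent coefficients\<close>

text \<open>Multi-indices on V0 x V1 have type 'a + 'b \<Rightarrow> nat, those on V0 x V1 x C have type
  'a + 'b option \<Rightarrow> nat, the value at Inr None being the exponent of \<lambda>.\<close>

definition x1_part :: "('a::finite + 'b::finite \<Rightarrow> nat) \<Rightarrow> 'b \<Rightarrow> nat" where
  "x1_part \<alpha> j = \<alpha> (Inr j)"

definition x0_part :: "('a::finite + 'b::finite \<Rightarrow> nat) \<Rightarrow> ('a + 'b option \<Rightarrow> nat)" where
  "x0_part \<alpha> k = (case k of Inl i \<Rightarrow> \<alpha> (Inl i) | Inr _ \<Rightarrow> 0)"

definition x1_lambda_index :: "('b::finite \<Rightarrow> nat) \<Rightarrow> nat \<Rightarrow> ('a::finite + 'b option \<Rightarrow> nat)" where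
  "x1_lambda_index \<beta> \<mu> k = (case k of Inl _ \<Rightarrow> 0 | Inr (Some j) \<Rightarrow> \<beta> j | Inr None \<Rightarrow> \<mu>)"

definition triple_index :: "('a::finite + 'b::finite \<Rightarrow> nat) \<Rightarrow> nat \<Rightarrow> ('a + 'b option \<Rightarrow> nat)" where
  "triple_index \<alpha> \<mu> k = (case k of Inl i \<Rightarrow> \<alpha> (Inl i) | Inr (Some j) \<Rightarrow> \<alpha> (Inr j) | Inr None \<Rightarrow> \<mu>)"

definition pair_index :: "('b::finite \<Rightarrow> nat) \<Rightarrow> ('a::finite + 'b option \<Rightarrow> nat) \<Rightarrow> ('a + 'b \<Rightarrow> nat)" where
  "pair_index \<beta> \<gamma> k = (case k of Inl i \<Rightarrow> \<gamma> (Inl i) | Inr j \<Rightarrow> \<beta> j)"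

definition x0_indices :: "('a::finite + 'b::finite option \<Rightarrow> nat) set" where
  "x0_indices = {\<gamma>. \<forall>k. \<gamma> (Inr k) = 0}"

definition vsnd :: "complex^('a::finite + 'b::finite) \<Rightarrow> complex^'b" where
  "vsnd z = (\<chi> j. z $ Inr j)"

definition laurent_exponent :: "nat \<Rightarrow> int \<Rightarrow> ('b::finite \<Rightarrow> nat) \<Rightarrow> int" where
  "laurent_exponent m \<nu> \<beta> = \<nu> + int m * int (\<Sum>j\<in>UNIV. \<beta> j)"

definition laurent_taylor_coeff ::
    "(complex^('a::finite + 'b::finite option) \<Rightarrow> complex) \<Rightarrow> nat \<Rightarrow> int \<Rightarrow> complex^'a \<Rightarrow>
      ('a + 'b \<Rightarrow> nat) \<Rightarrow> complex" where
  "laurent_taylor_coeff P m \<nu> q \<alpha> =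
     (if laurent_exponent m \<nu> (x1_part \<alpha>) \<ge> 0
      then tcoef (triple_index \<alpha> (nat (laurent_exponent m \<nu> (x1_part \<alpha>)))) P (vjoin q 0) else 0)"

lemma sum_UNIV_Plus:
  "(\<Sum>k\<in>(UNIV::('a::finite+'b::finite) set). f k) = (\<Sum>i\<in>UNIV. f (Inl i)) + (\<Sum>j\<in>UNIV. f (Inr j))"
  using sum.Plus[of "UNIV::'a set" "UNIV::'b set" f] by (simp add: o_def)

lemma prod_UNIV_Plus:
  "(\<Prod>k\<in>(UNIV::('a::finite+'b::finite) set). f k) = (\<Prod>i\<in>UNIV. f (Inl i)) * (\<Prod>j\<in>UNIV. f (Inr j))"
  using prod.Plus[of "UNIV::'a set" "UNIV::'b set" f] by (simp add: o_def)

lemma sum_UNIV_option: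
  "(\<Sum>k\<in>(UNIV::'b::finite option set). f k) = f None + (\<Sum>j\<in>UNIV. f (Some j))"
  by (simp add: UNIV_option_conv sum.reindex)

lemma prod_UNIV_option:
  "(\<Prod>k\<in>(UNIV::'b::finite option set). f k) = f None * (\<Prod>j\<in>UNIV. f (Some j))"
  by (simp add: UNIV_option_conv prod.reindex)

lemma mdeg_triple_index: "mdeg (triple_index \<alpha> \<mu>) = mdeg \<alpha> + \<mu>"
  unfolding mdeg_def by (simp add: sum_UNIV_Plus sum_UNIV_option triple_index_def)

lemma mdeg_x1_part_le: "mdeg (x1_part \<alpha>) \<le> mdeg \<alpha>"
  unfolding mdeg_def by (simp add: sum_UNIV_Plus x1_part_def)

lemma triple_index_eq_add: "triple_index \<alpha> \<mu> = (\<lambda>k. x0_part \<alpha> k + x1_lambda_index (x1_part \<alpha>) \<mu> k)"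
  by (auto simp: fun_eq_iff triple_index_def x0_part_def x1_lambda_index_def x1_part_def
      split: sum.split option.split)

lemma pair_index_x1_part_x0_part: "pair_index (x1_part \<alpha>) (x0_part \<alpha>) = \<alpha>"
  by (auto simp: fun_eq_iff pair_index_def x0_part_def x1_part_def split: sum.split)

lemma x0_part_in_x0_indices: "x0_part \<alpha> \<in> x0_indices"
  by (simp add: x0_indices_def x0_part_def)

lemma x1_part_pair_index: "x1_part (pair_index \<beta> \<gamma>) = \<beta>"
  by (simp add: fun_eq_iff pair_index_def x1_part_def)

lemma x0_part_pair_index: "\<gamma> \<in> x0_indices \<Longrightarrow> x0_part (pair_index \<beta> \<gamma>) = \<gamma>"
  by (auto simp: fun_eq_iff pair_index_def x0_part_def x0_indices_def split: sum.split)

lemma vjoin_add: "vjoin (x + y) (u + v) = vjoin x u + vjoin y v"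
  by (simp add: vec_eq_iff vjoin_def split: sum.split)

lemma vjoin_nth_Inl [simp]: "vjoin x y $ Inl i = x $ i"
  by (simp add: vjoin_def)

lemma vjoin_nth_Inr [simp]: "vjoin x y $ Inr j = y $ j"
  by (simp add: vjoin_def)

lemma vfst_nth [simp]: "vfst z $ i = z $ Inl i"
  by (simp add: vfst_def)

lemma vfst_vjoin [simp]: "vfst (vjoin x y) = x"
  by (simp add: vec_eq_iff)

lemma vfst_vjoin_add: "vfst (vjoin q 0 + z) = q + vfst z"
  by (simp add: vec_eq_iff)

lemma vjoin_zero [simp]: "vjoin 0 0 = 0"
  by (simp add: vec_eq_iff vjoin_def split: sum.split)

lemma mmonom_split_x0_x1:
  fixes z :: "complex^('a::finite + 'b::finite)"
  shows "mmonom \<alpha> z =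
    mmonom (x0_part \<alpha>) (vjoin (vfst z) (0::complex^'b option)) * mmonom (x1_part \<alpha>) (vsnd z)"
  unfolding mmonom_def by (simp add: prod_UNIV_Plus prod_UNIV_option x0_part_def x1_part_def vsnd_def)

lemma laurent_idx_eq: "laurent_idx m \<nu> = {\<beta>. laurent_exponent m \<nu> \<beta> \<ge> 0}"
  by (simp add: laurent_idx_def laurent_exponent_def)

lemma laurent_term_vjoin_add:
  "laurent_term P m \<nu> (vjoin q 0 + z) \<beta> =
     Pcoef P \<beta> (nat (laurent_exponent m \<nu> \<beta>)) (q + vfst z) * mmonom \<beta> (vsnd z)"
  by (simp add: laurent_term_def laurent_exponent_def vfst_vjoin_add mmonom_def vsnd_def)

lemma Pcoef_eq_tcoef:
  fixes P :: "complex^('a::finite + 'b::finite option) \<Rightarrow> complex"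
  shows "Pcoef P \<beta> \<mu> x0 = tcoef (x1_lambda_index \<beta> \<mu>) P (vjoin x0 0)"
proof -
  have "(\<lambda>k. case k of Inl _ \<Rightarrow> 0 | Inr (Some j) \<Rightarrow> \<beta> j | Inr None \<Rightarrow> \<mu>) =
      (x1_lambda_index \<beta> \<mu> :: 'a + 'b option \<Rightarrow> nat)"
    by (simp add: fun_eq_iff x1_lambda_index_def)
  then show ?thesis by (simp add: Pcoef_def)
qed

lemma laurent_taylor_coeff_eq:
  assumes "mpow_expansion P (vjoin q 0) a R"
  shows "laurent_taylor_coeff P m \<nu> q \<alpha> =
    (if laurent_exponent m \<nu> (x1_part \<alpha>) \<ge> 0
     then a (triple_index \<alpha> (nat (laurent_exponent m \<nu> (x1_part \<alpha>)))) else 0)"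
  by (simp add: laurent_taylor_coeff_def tcoef_mpow_expansion[OF assms])

lemma infsum_pair_index:
  fixes F :: "('a::finite + 'b::finite \<Rightarrow> nat) \<Rightarrow> complex"
  assumes "F summable_on {\<alpha>. x1_part \<alpha> \<in> I}"
  shows "(\<lambda>\<beta>. \<Sum>\<^sub>\<infinity>\<gamma>\<in>x0_indices. F (pair_index \<beta> \<gamma>)) summable_on I"
    and "(\<Sum>\<^sub>\<infinity>\<beta>\<in>I. \<Sum>\<^sub>\<infinity>\<gamma>\<in>x0_indices. F (pair_index \<beta> \<gamma>)) = infsum F {\<alpha>. x1_part \<alpha> \<in> I}"
proof -
  define T where "T = Sigma I (\<lambda>_. (x0_indices :: ('a + 'b option \<Rightarrow> nat) set))"
  have b2: "(x1_part \<alpha>, x0_part \<alpha>) \<in> T" if "x1_part \<alpha> \<in> I" for \<alpha>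
    using that by (simp add: T_def x0_part_in_x0_indices)
  have b3: "(x1_part (pair_index (fst y) (snd y)), x0_part (pair_index (fst y) (snd y))) = y" if "y \<in> T" for y
    using that by (auto simp: T_def x1_part_pair_index x0_part_pair_index)
  have b4: "x1_part (pair_index (fst y) (snd y)) \<in> I" if "y \<in> T" for y
    using that by (auto simp: T_def x1_part_pair_index)
  have "F summable_on {\<alpha>. x1_part \<alpha> \<in> I} \<longleftrightarrow> (\<lambda>y. F (pair_index (fst y) (snd y))) summable_on T"
    by (rule summable_on_reindex_bij_witness[where i="\<lambda>y. pair_index (fst y) (snd y)"
          and j="\<lambda>\<alpha>. (x1_part \<alpha>, x0_part \<alpha>)"])
      (use b2 b3 b4 in \<open>auto simp: pair_index_x1_part_x0_part\<close>)
  then have sum_T: "(\<lambda>(\<beta>, \<gamma>). F (pair_index \<beta> \<gamma>)) summable_on T"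
    using assms by (simp add: case_prod_unfold)
  then show "(\<lambda>\<beta>. \<Sum>\<^sub>\<infinity>\<gamma>\<in>x0_indices. F (pair_index \<beta> \<gamma>)) summable_on I"
    unfolding T_def by (rule summable_on_Sigma_banach)
  have "(\<Sum>\<^sub>\<infinity>\<beta>\<in>I. \<Sum>\<^sub>\<infinity>\<gamma>\<in>x0_indices. F (pair_index \<beta> \<gamma>)) = (\<Sum>\<^sub>\<infinity>(\<beta>, \<gamma>)\<in>T. F (pair_index \<beta> \<gamma>))"
    using infsum_Sigma_banach[OF sum_T[unfolded T_def]] by (simp add: T_def)
  also have "\<dots> = infsum F {\<alpha>. x1_part \<alpha> \<in> I}"
    by (rule infsum_reindex_bij_witness[where j="\<lambda>y. pair_index (fst y) (snd y)"
          and i="\<lambda>\<alpha>. (x1_part \<alpha>, x0_part \<alpha>)"])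
      (use b2 b3 b4 in \<open>auto simp: case_prod_unfold pair_index_x1_part_x0_part\<close>)
  finally show "(\<Sum>\<^sub>\<infinity>\<beta>\<in>I. \<Sum>\<^sub>\<infinity>\<gamma>\<in>x0_indices. F (pair_index \<beta> \<gamma>)) = infsum F {\<alpha>. x1_part \<alpha> \<in> I}" .
qed

lemma Pcoef_eq_infsum:
  fixes P :: "complex^('a::finite + 'b::finite option) \<Rightarrow> complex" and q z0 :: "complex^'a"
  assumes P: "mpow_expansion P (vjoin q 0) a R" and z0: "\<And>i. norm (z0$i) < R"
  shows "Pcoef P \<beta> \<mu> (q + z0) =
    (\<Sum>\<^sub>\<infinity>\<gamma>\<in>x0_indices. a (\<lambda>k. \<gamma> k + x1_lambda_index \<beta> \<mu> k) * mmonom \<gamma> (vjoin z0 (0::complex^'b option)))"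
proof -
  define c :: "'a + 'b option \<Rightarrow> nat" where "c = x1_lambda_index \<beta> \<mu>"
  define H :: "complex^('a + 'b option)" where "H = vjoin z0 0"
  define CF :: complex where "CF = (\<Prod>i\<in>UNIV. of_nat (fact (c i)))"
  have CF0: "CF \<noteq> 0" unfolding CF_def by simp
  have "0 < R" using P by (simp add: mpow_expansion_def)
  then have HR: "\<And>i. norm (H$i) < R" using z0 by (auto simp: H_def vjoin_def split: sum.split)
  have "vjoin (q + z0) (0::complex^'b option) = vjoin q 0 + H"
    unfolding H_def using vjoin_add[of q z0 0 0] by simp
  then have "Pcoef P \<beta> \<mu> (q + z0) = cpartials (mlist c) P (vjoin q 0 + H) / CF"
    by (simp add: Pcoef_eq_tcoef tcoef_def c_def CF_def)
  also have "cpartials (mlist c) P (vjoin q 0 + H) = mpow_series (coeff_derivs (mlist c) a) H"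
    by (rule cpartials_mpow_expansion[OF P HR])
  also have "mpow_series (coeff_derivs (mlist c) a) H / CF =
      (\<Sum>\<^sub>\<infinity>\<gamma>. coeff_derivs (mlist c) a \<gamma> * mmonom \<gamma> H * inverse CF)"
    unfolding mpow_series_def by (simp add: infsum_cmult_left' divide_inverse)
  also have "\<dots> = (\<Sum>\<^sub>\<infinity>\<gamma>\<in>x0_indices. a (\<lambda>k. \<gamma> k + c k) * mmonom \<gamma> H)"
  proof (rule infsum_cong_neutral)
    fix \<gamma> :: "'a + 'b option \<Rightarrow> nat" assume "\<gamma> \<in> UNIV - x0_indices"
    then obtain k where "\<gamma> (Inr k) \<noteq> 0" by (auto simp: x0_indices_def)
    then have "mmonom \<gamma> H = 0" by (intro mmonom_eq_0[of H "Inr k"]) (auto simp: H_def)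
    then show "coeff_derivs (mlist c) a \<gamma> * mmonom \<gamma> H * inverse CF = 0" by simp
  next
    fix \<gamma> :: "'a + 'b option \<Rightarrow> nat" assume "\<gamma> \<in> UNIV \<inter> x0_indices"
    then have \<gamma>: "\<And>k. \<gamma> (Inr k) = 0" by (auto simp: x0_indices_def)
    have "(\<Prod>i\<in>UNIV. of_nat (fact (\<gamma> i + c i)) / of_nat (fact (\<gamma> i)) :: complex) = CF"
      unfolding CF_def
    proof (rule prod.cong)
      fix i :: "'a + 'b option"
      show "of_nat (fact (\<gamma> i + c i)) / of_nat (fact (\<gamma> i)) = (of_nat (fact (c i)) :: complex)"
        using \<gamma> by (cases i) (auto simp: c_def x1_lambda_index_def)
    qed simp
    then have "coeff_derivs (mlist c) a \<gamma> = CF * a (\<lambda>k. \<gamma> k + c k)"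
      by (simp add: coeff_derivs_eq count_list_mlist)
    then show "coeff_derivs (mlist c) a \<gamma> * mmonom \<gamma> H * inverse CF = a (\<lambda>k. \<gamma> k + c k) * mmonom \<gamma> H"
      using CF0 by (simp add: field_simps)
  qed auto
  finally show ?thesis by (simp add: c_def H_def)
qed

lemma laurent_coef_eq_mpow_series:
  fixes P :: "complex^('a::finite + 'b::finite option) \<Rightarrow> complex"
  assumes P: "mpow_expansion P (vjoin q 0) a R" and z0: "\<And>i. norm (z $ Inl i) < R"
    and sum: "(\<lambda>\<alpha>. laurent_taylor_coeff P m \<nu> q \<alpha> * mmonom \<alpha> z) summable_on UNIV"
  shows "laurent_term P m \<nu> (vjoin q 0 + z) summable_on laurent_idx m \<nu>"
    and "laurent_coef P m \<nu> (vjoin q 0 + z) = mpow_series (laurent_taylor_coeff P m \<nu> q) z"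
proof -
  define e where "e = laurent_taylor_coeff P m \<nu> q"
  define D where "D = {\<alpha>::'a + 'b \<Rightarrow> nat. x1_part \<alpha> \<in> laurent_idx m \<nu>}"
  have e0: "e \<alpha> = 0" if "\<alpha> \<notin> D" for \<alpha>
    using that by (simp add: D_def e_def laurent_idx_eq laurent_taylor_coeff_def)
  have sum_D: "(\<lambda>\<alpha>. e \<alpha> * mmonom \<alpha> z) summable_on D"
    using summable_on_subset_banach[OF sum] by (simp add: e_def)
  have inner: "(\<Sum>\<^sub>\<infinity>\<gamma>\<in>x0_indices. e (pair_index \<beta> \<gamma>) * mmonom (pair_index \<beta> \<gamma>) z) =
      laurent_term P m \<nu> (vjoin q 0 + z) \<beta>" if "\<beta> \<in> laurent_idx m \<nu>" for \<beta>
  proof -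
    define \<mu> where "\<mu> = nat (laurent_exponent m \<nu> \<beta>)"
    have "e (pair_index \<beta> \<gamma>) * mmonom (pair_index \<beta> \<gamma>) z =
        a (\<lambda>k. \<gamma> k + x1_lambda_index \<beta> \<mu> k) * mmonom \<gamma> (vjoin (vfst z) (0::complex^'b option)) *
        mmonom \<beta> (vsnd z)" if "\<gamma> \<in> x0_indices" for \<gamma>
      using \<open>\<beta> \<in> laurent_idx m \<nu>\<close> that
      by (simp add: e_def laurent_taylor_coeff_eq[OF P] laurent_idx_eq x1_part_pair_index
          x0_part_pair_index triple_index_eq_add mmonom_split_x0_x1[of "pair_index \<beta> \<gamma>" z] \<mu>_def)
    then have "(\<Sum>\<^sub>\<infinity>\<gamma>\<in>x0_indices. e (pair_index \<beta> \<gamma>) * mmonom (pair_index \<beta> \<gamma>) z) =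
        (\<Sum>\<^sub>\<infinity>\<gamma>\<in>x0_indices. a (\<lambda>k. \<gamma> k + x1_lambda_index \<beta> \<mu> k) * mmonom \<gamma> (vjoin (vfst z) 0)) *
        mmonom \<beta> (vsnd z)"
      by (simp add: infsum_cmult_left' cong: infsum_cong)
    also have "\<dots> = laurent_term P m \<nu> (vjoin q 0 + z) \<beta>"
      using z0 by (simp add: Pcoef_eq_infsum[OF P, symmetric] laurent_term_vjoin_add \<mu>_def)
    finally show ?thesis .
  qed
  show "laurent_term P m \<nu> (vjoin q 0 + z) summable_on laurent_idx m \<nu>"
    using infsum_pair_index(1)[OF sum_D[unfolded D_def]] by (simp add: inner cong: summable_on_cong)
  have "laurent_coef P m \<nu> (vjoin q 0 + z) =
      (\<Sum>\<^sub>\<infinity>\<beta>\<in>laurent_idx m \<nu>. \<Sum>\<^sub>\<infinity>\<gamma>\<in>x0_indices. e (pair_index \<beta> \<gamma>) * mmonom (pair_index \<beta> \<gamma>) z)"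
    unfolding laurent_coef_def by (rule infsum_cong) (simp add: inner)
  also have "\<dots> = (\<Sum>\<^sub>\<infinity>\<alpha>\<in>D. e \<alpha> * mmonom \<alpha> z)"
    unfolding D_def by (rule infsum_pair_index(2)[OF sum_D[unfolded D_def]])
  also have "\<dots> = mpow_series e z"
    unfolding mpow_series_def by (rule infsum_cong_neutral) (use e0 in auto)
  finally show "laurent_coef P m \<nu> (vjoin q 0 + z) = mpow_series (laurent_taylor_coeff P m \<nu> q) z"
    by (simp add: e_def)
qed

text \<open>On the polyradius \<rho>^(m+1) the factor \<rho>^(m|\<beta>|) gained on x1^\<beta> absorbs the factor
  \<rho>^(-m|\<beta>|) lost on \<lambda>^\<mu>, \<mu> = \<nu> + m|\<beta>|.\<close>

lemma laurent_taylor_coeff_le: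
  fixes P :: "complex^('a::finite + 'b::finite option) \<Rightarrow> complex"
  assumes P: "mpow_expansion P (vjoin q 0) a R" and M: "\<And>\<gamma>. norm (a \<gamma>) * \<rho> ^ mdeg \<gamma> \<le> M"
    and \<rho>: "0 < \<rho>" "\<rho> \<le> 1"
  shows "norm (laurent_taylor_coeff P m \<nu> q \<alpha>) * (\<rho> ^ Suc m) ^ mdeg \<alpha> \<le> M / \<rho> ^ nat \<nu>"
proof (cases "laurent_exponent m \<nu> (x1_part \<alpha>) \<ge> 0")
  case False
  then show ?thesis using cauchy_bound_nonneg[OF M] \<rho> by (simp add: laurent_taylor_coeff_def)
next
  case True
  define \<mu> where "\<mu> = nat (laurent_exponent m \<nu> (x1_part \<alpha>))"
  define d where "d = mdeg \<alpha>"
  have "int \<mu> = \<nu> + int m * int (mdeg (x1_part \<alpha>))"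
    using True by (simp add: \<mu>_def laurent_exponent_def mdeg_def)
  also have "\<dots> \<le> int (nat \<nu>) + int m * int d"
    using mdeg_x1_part_le[of \<alpha>] by (intro add_mono mult_left_mono) (auto simp: d_def)
  also have "\<dots> = int (nat \<nu> + m * d)" by simp
  finally have "d + \<mu> \<le> Suc m * d + nat \<nu>" by (simp only: of_nat_le_iff) simp
  have "norm (laurent_taylor_coeff P m \<nu> q \<alpha>) * (\<rho> ^ Suc m) ^ mdeg \<alpha> * \<rho> ^ nat \<nu> =
      norm (a (triple_index \<alpha> \<mu>)) * \<rho> ^ (Suc m * d + nat \<nu>)"
    using True
    by (simp add: laurent_taylor_coeff_eq[OF P] \<mu>_def d_def power_add power_mult power_mult_distrib mult.assoc)
  also have "\<dots> \<le> norm (a (triple_index \<alpha> \<mu>)) * \<rho> ^ (d + \<mu>)"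
    by (intro mult_left_mono power_decreasing \<open>d + \<mu> \<le> Suc m * d + nat \<nu>\<close>) (use \<rho> in auto)
  also have "\<dots> \<le> M" using M[of "triple_index \<alpha> \<mu>"] by (simp add: mdeg_triple_index d_def)
  finally show ?thesis using \<rho> by (simp add: field_simps)
qed

lemma laurent_coef_mpow_expansion:
  fixes P :: "complex^('a::finite + 'b::finite option) \<Rightarrow> complex"
  assumes P: "mpow_expansion P (vjoin q 0) a R"
  obtains r where "mpow_expansion (laurent_coef P m \<nu>) (vjoin q 0) (laurent_taylor_coeff P m \<nu> q) r"
    and "\<And>z. (\<forall>i. norm (z$i) < r) \<Longrightarrow> laurent_term P m \<nu> (vjoin q 0 + z) summable_on laurent_idx m \<nu>"
proof -
  have R: "0 < R" using P by (simp add: mpow_expansion_def)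
  define \<rho> where "\<rho> = min (R / 2) (1 / 2)"
  have \<rho>: "0 < \<rho>" "\<rho> < R" "\<rho> \<le> 1" using R by (auto simp: \<rho>_def)
  obtain M where M: "\<And>\<gamma>. norm (a \<gamma>) * \<rho> ^ mdeg \<gamma> \<le> M" using P \<rho> unfolding mpow_expansion_def by blast
  define r where "r = \<rho> ^ Suc m"
  have "r \<le> \<rho>" unfolding r_def using \<rho> by (simp add: mult_left_le power_le_one)
  moreover have "0 < r" using \<rho> by (simp add: r_def)
  ultimately have r: "0 < r" "r < R" using \<rho> by linarith+
  have coeff_le: "norm (laurent_taylor_coeff P m \<nu> q \<alpha>) * r ^ mdeg \<alpha> \<le> M / \<rho> ^ nat \<nu>" for \<alpha>
    unfolding r_def by (rule laurent_taylor_coeff_le[OF P M \<rho>(1,3)])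
  have expansion: "laurent_term P m \<nu> (vjoin q 0 + z) summable_on laurent_idx m \<nu> \<and>
      laurent_coef P m \<nu> (vjoin q 0 + z) = mpow_series (laurent_taylor_coeff P m \<nu> q) z"
    if z: "\<forall>i. norm (z$i) < r" for z
  proof -
    obtain s where "s < r" "\<And>i. norm (z$i) \<le> s" using max_norm_coord_less z by metis
    then have "(\<lambda>\<alpha>. laurent_taylor_coeff P m \<nu> q \<alpha> * mmonom \<alpha> z) summable_on UNIV"
      by (intro summable_mpow_series[OF coeff_le r(1)])
    moreover have "norm (z $ Inl i) < R" for i using z r(2) by (meson less_trans)
    ultimately show ?thesis using laurent_coef_eq_mpow_series[OF P] by simp
  qed
  show ?thesis
  proof (rule that)
    show "mpow_expansion (laurent_coef P m \<nu>) (vjoin q 0) (laurent_taylor_coeff P m \<nu> q) r"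
      by (rule mpow_expansionI[OF r(1) coeff_le]) (use expansion in simp)
  qed (use expansion in simp)
qed

lemma poly_fun_cmult: "poly_fun f \<Longrightarrow> poly_fun (\<lambda>x. c * f x)"
  unfolding poly_fun_def
proof (elim exE conjE)
  fix A a assume "finite A" "\<forall>x. f x = (\<Sum>\<alpha>\<in>A. a \<alpha> * (\<Prod>i\<in>UNIV. (x $ i) ^ \<alpha> i))"
  then show "\<exists>A a. finite A \<and> (\<forall>x. c * f x = (\<Sum>\<alpha>\<in>A. a \<alpha> * (\<Prod>i\<in>UNIV. (x $ i) ^ \<alpha> i)))"
    by (intro exI[of _ A] exI[of _ "\<lambda>\<alpha>. c * a \<alpha>"]) (simp add: sum_distrib_left mult.assoc)
qed

lemma tcoef_zero_index: "tcoef (\<lambda>_::'n::finite. 0) f y = f y"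
  by (simp add: tcoef_def mlist_zero)

lemma laurent_coef_0_on_V0:
  fixes P :: "complex^('a::finite + 'b::finite option) \<Rightarrow> complex"
  assumes "\<forall>x0. P (vtriple x0 0 0) = 0"
  shows "laurent_coef P m 0 (vjoin x0 0) = 0"
proof -
  define t where "t = laurent_term P m 0 (vjoin x0 (0::complex^'b))"
  have "t \<beta> = 0" if \<beta>: "\<beta> \<noteq> (\<lambda>_. 0)" for \<beta>
  proof -
    obtain j where "\<beta> j \<noteq> 0" using \<beta> by auto
    then have "(\<Prod>j\<in>UNIV. (vjoin x0 (0::complex^'b) $ Inr j) ^ \<beta> j) = 0"
      by (intro prod_zero) (auto intro: bexI[of _ j])
    then show ?thesis by (simp add: t_def laurent_term_def)
  qed
  then have "laurent_coef P m 0 (vjoin x0 0) = t (\<lambda>_. 0)"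
    unfolding laurent_coef_def t_def[symmetric]
    by (subst infsum_cong_neutral[where T="{\<lambda>_. 0}"]) (auto simp: laurent_idx_def)
  also have "\<dots> = P (vjoin x0 0)"
  proof -
    have "(x1_lambda_index (\<lambda>_. 0) 0 :: 'a + 'b option \<Rightarrow> nat) = (\<lambda>_. 0)"
      by (auto simp: fun_eq_iff x1_lambda_index_def split: sum.split option.split)
    then show ?thesis by (simp add: t_def laurent_term_def Pcoef_eq_tcoef tcoef_zero_index)
  qed
  also have "vjoin x0 (0::complex^'b option) = vtriple x0 0 0"
  proof -
    have "(\<chi> k. case k of Some j \<Rightarrow> (0::complex^'b) $ j | None \<Rightarrow> 0) = (0::complex^'b option)"
      by (simp add: vec_eq_iff split: option.split)
    then show ?thesis by (simp add: vtriple_def)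
  qed
  finally show ?thesis using assms by simp
qed

lemma Rring_mpow_expansions_on_V0:
  assumes "Rring P"
  obtains a R where "\<And>q. mpow_expansion P (vjoin q 0) (a q) (R q)"
proof -
  obtain U where "open U" "range (\<lambda>x0. vjoin x0 0) \<subseteq> U" "holo_on U P"
    using assms unfolding Rring_def by blast
  then have "\<forall>q. \<exists>a R. mpow_expansion P (vjoin q 0) a R" using holo_on_imp_mpow_expansion by blast
  then obtain a where "\<forall>q. \<exists>R. mpow_expansion P (vjoin q 0) (a q) R" by (auto dest: choice)
  then obtain R where "\<forall>q. mpow_expansion P (vjoin q 0) (a q) (R q)" by (auto dest: choice)
  then show ?thesis using that by blast
qed

lemma cpartials_laurent_coef_on_V0:
  fixes P :: "complex^('a::finite + 'b::finite option) \<Rightarrow> complex"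
  assumes "Rring P"
  obtains c js where "\<And>x0. cpartials is (laurent_coef P m \<nu>) (vjoin x0 0) = c * cpartials js P (vjoin x0 0)"
proof -
  obtain a R where P: "\<And>q. mpow_expansion P (vjoin q 0) (a q) (R q)"
    using Rring_mpow_expansions_on_V0[OF assms] by blast
  define n where "n = count_list is"
  define \<mu> where "\<mu> = laurent_exponent m \<nu> (x1_part n)"
  define d where "d = triple_index n (nat \<mu>)"
  define c :: complex
    where "c = (if \<mu> \<ge> 0 then (\<Prod>i\<in>UNIV. of_nat (fact (n i))) / (\<Prod>i\<in>UNIV. of_nat (fact (d i))) else 0)"
  have "cpartials is (laurent_coef P m \<nu>) (vjoin x0 0) = c * cpartials (mlist d) P (vjoin x0 0)" for x0
  proof -
    obtain r where "mpow_expansion (laurent_coef P m \<nu>) (vjoin x0 0) (laurent_taylor_coeff P m \<nu> x0) r"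
      using laurent_coef_mpow_expansion[OF P] by blast
    then have "cpartials is (laurent_coef P m \<nu>) (vjoin x0 0) =
        coeff_derivs is (laurent_taylor_coeff P m \<nu> x0) (\<lambda>_. 0)"
      by (rule mpow_expansion_center[OF mpow_expansion_cpartials])
    also have "\<dots> = (\<Prod>i\<in>UNIV. of_nat (fact (n i))) * laurent_taylor_coeff P m \<nu> x0 n"
      by (simp add: coeff_derivs_eq n_def)
    also have "\<dots> = c * cpartials (mlist d) P (vjoin x0 0)"
      by (simp add: laurent_taylor_coeff_def tcoef_def c_def d_def \<mu>_def)
    finally show ?thesis .
  qed
  then show ?thesis by (rule that)
qed

lemma laurent_coef_Rring:
  fixes P :: "complex^('a::finite + 'b::finite option) \<Rightarrow> complex"
  assumes "Rring P"
  shows "\<exists>U. open U \<and> range (\<lambda>x0. vjoin x0 0) \<subseteq> U \<and>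
      (\<forall>z\<in>U. laurent_term P m \<nu> z summable_on laurent_idx m \<nu>) \<and> holo_on U (laurent_coef P m \<nu>)"
    and "Rring (laurent_coef P m \<nu>)"
proof -
  obtain a R where P: "\<And>q. mpow_expansion P (vjoin q 0) (a q) (R q)"
    using Rring_mpow_expansions_on_V0[OF assms] by blast
  have "\<exists>r. mpow_expansion (laurent_coef P m \<nu>) (vjoin q 0) (laurent_taylor_coeff P m \<nu> q) r \<and>
      (\<forall>z. (\<forall>i. norm (z$i) < r) \<longrightarrow> laurent_term P m \<nu> (vjoin q 0 + z) summable_on laurent_idx m \<nu>)" for q
    by (rule laurent_coef_mpow_expansion[OF P]) blast
  then have "\<exists>r. \<forall>q. mpow_expansion (laurent_coef P m \<nu>) (vjoin q 0) (laurent_taylor_coeff P m \<nu> q) (r q) \<and>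
      (\<forall>z. (\<forall>i. norm (z$i) < r q) \<longrightarrow> laurent_term P m \<nu> (vjoin q 0 + z) summable_on laurent_idx m \<nu>)"
    by (intro choice allI)
  then obtain r
    where r: "\<And>q. mpow_expansion (laurent_coef P m \<nu>) (vjoin q 0) (laurent_taylor_coeff P m \<nu> q) (r q)"
    and sum: "\<And>q z. \<forall>i. norm (z$i) < r q \<Longrightarrow> laurent_term P m \<nu> (vjoin q 0 + z) summable_on laurent_idx m \<nu>"
    by blast
  define U where "U = (\<Union>q. polydisc (vjoin q (0::complex^'b)) (r q))"
  have "open U" unfolding U_def by (intro open_UN ballI open_polydisc)
  moreover have "range (\<lambda>x0. vjoin x0 0) \<subseteq> U"
    using r by (auto simp: U_def polydisc_def mpow_expansion_def)
  moreover have "laurent_term P m \<nu> z summable_on laurent_idx m \<nu>" if z: "z \<in> U" for z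
  proof -
    obtain q where "z \<in> polydisc (vjoin q 0) (r q)" using z by (auto simp: U_def)
    then have "laurent_term P m \<nu> (vjoin q 0 + (z - vjoin q 0)) summable_on laurent_idx m \<nu>"
      by (intro sum) (auto simp: polydisc_def)
    then show ?thesis by simp
  qed
  moreover have "holo_on U (laurent_coef P m \<nu>)"
    using holo_on_polydisc_mpow_expansion[OF r] unfolding U_def holo_on_def by blast
  ultimately show "\<exists>U. open U \<and> range (\<lambda>x0. vjoin x0 0) \<subseteq> U \<and>
      (\<forall>z\<in>U. laurent_term P m \<nu> z summable_on laurent_idx m \<nu>) \<and> holo_on U (laurent_coef P m \<nu>)"
    by blast
  moreover have "poly_fun (\<lambda>x0. cpartials is (laurent_coef P m \<nu>) (vjoin x0 0))" for "is"
  proof -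
    obtain c js
      where eq: "\<And>x0. cpartials is (laurent_coef P m \<nu>) (vjoin x0 0) = c * cpartials js P (vjoin x0 0)"
      using cpartials_laurent_coef_on_V0[OF assms] by blast
    have "poly_fun (\<lambda>x0. cpartials js P (vjoin x0 0))" using assms unfolding Rring_def by blast
    then show ?thesis unfolding eq by (rule poly_fun_cmult)
  qed
  ultimately show "Rring (laurent_coef P m \<nu>)" unfolding Rring_def by blast
qed

lemma laurent_coef_vanishes_to:
  fixes P :: "complex^('a::finite + 'b::finite option) \<Rightarrow> complex"
  assumes "Rring P" "vanishes_to P (real_of_int K)"
  shows "vanishes_to (laurent_coef P m \<nu>) (real_of_int (K - \<nu>) / real (m + 1))"
  unfolding vanishes_to_def
proof (intro allI impI)
  fix \<alpha> :: "'a + 'b \<Rightarrow> nat"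
  assume \<alpha>: "real (\<Sum>i\<in>UNIV. \<alpha> i) < real_of_int (K - \<nu>) / real (m + 1)"
  obtain a R where "mpow_expansion P (vjoin 0 0) a R"
    using Rring_mpow_expansions_on_V0[OF assms(1)] by blast
  then obtain r where "mpow_expansion (laurent_coef P m \<nu>) (vjoin 0 0) (laurent_taylor_coeff P m \<nu> 0) r"
    by (rule laurent_coef_mpow_expansion)
  then have "tcoef \<alpha> (laurent_coef P m \<nu>) (vjoin 0 0) = laurent_taylor_coeff P m \<nu> 0 \<alpha>"
    by (rule tcoef_mpow_expansion)
  then have "tcoef \<alpha> (laurent_coef P m \<nu>) 0 = laurent_taylor_coeff P m \<nu> 0 \<alpha>" by simp
  also have "\<dots> = 0"
  proof (cases "laurent_exponent m \<nu> (x1_part \<alpha>) \<ge> 0")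
    case True
    define \<mu> where "\<mu> = nat (laurent_exponent m \<nu> (x1_part \<alpha>))"
    have "real (mdeg \<alpha>) * real (m + 1) < real_of_int (K - \<nu>)"
      using \<alpha> unfolding mdeg_def by (simp add: field_simps)
    then have "int (mdeg \<alpha>) * int (m + 1) < K - \<nu>"
      by (metis of_int_less_iff of_int_of_nat_eq of_int_mult)
    moreover have "int \<mu> = \<nu> + int m * int (mdeg (x1_part \<alpha>))"
      using True by (simp add: \<mu>_def laurent_exponent_def mdeg_def)
    then have "int \<mu> \<le> \<nu> + int m * int (mdeg \<alpha>)"
      using mdeg_x1_part_le[of \<alpha>] by (simp add: mult_left_mono)
    ultimately have "int (mdeg \<alpha>) + int \<mu> < K" by (simp add: algebra_simps)
    then have "real (mdeg (triple_index \<alpha> \<mu>)) < real_of_int K"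
      unfolding mdeg_triple_index by (metis of_int_less_iff of_int_of_nat_eq of_nat_add)
    then have "tcoef (triple_index \<alpha> \<mu>) P 0 = 0" using assms(2) unfolding vanishes_to_def mdeg_def by blast
    then show ?thesis using True by (simp add: laurent_taylor_coeff_def \<mu>_def)
  qed (simp add: laurent_taylor_coeff_def)
  finally show "tcoef \<alpha> (laurent_coef P m \<nu>) 0 = 0" .
qed

theorem lemma10p6:
  fixes P :: "complex^('a::finite + 'b::finite option) \<Rightarrow> complex"
    and m :: nat
  assumes hP: "Rring P"
    and hP0: "\<forall>x0. P (vtriple x0 0 0) = 0"
  shows "(\<forall>x0. laurent_coef P m 0 (vjoin x0 0) = 0)
    \<and> (\<forall>\<nu>. (\<exists>U. open U \<and> range (\<lambda>x0. vjoin x0 0) \<subseteq> U \<and>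
               (\<forall>z\<in>U. laurent_term P m \<nu> z summable_on laurent_idx m \<nu>))
           \<and> Rring (laurent_coef P m \<nu>))
    \<and> (\<forall>K::int. K > 0 \<longrightarrow> vanishes_to P (real_of_int K) \<longrightarrow>
         (\<forall>\<nu>. \<nu> \<le> K \<longrightarrow> vanishes_to (laurent_coef P m \<nu>) (real_of_int (K - \<nu>) / real (m + 1))))"
proof (intro conjI allI impI)
  show "laurent_coef P m 0 (vjoin x0 0) = 0" for x0 by (rule laurent_coef_0_on_V0[OF hP0])
  show "\<exists>U. open U \<and> range (\<lambda>x0. vjoin x0 0) \<subseteq> U \<and>
      (\<forall>z\<in>U. laurent_term P m \<nu> z summable_on laurent_idx m \<nu>)" for \<nu>
    using laurent_coef_Rring(1)[OF hP] by blast
  show "Rring (laurent_coef P m \<nu>)" for \<nu> by (rule laurent_coef_Rring(2)[OF hP])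
  show "vanishes_to (laurent_coef P m \<nu>) (real_of_int (K - \<nu>) / real (m + 1))"
    if "vanishes_to P (real_of_int K)" for K \<nu> by (rule laurent_coef_vanishes_to[OF hP that])
qed

end
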